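(* Let $n,k\ge1$ and let $\mathcal{S}_n^k$ be the extended Shi arrangement in $\mathbb{R}^n$ consisting of the hyperplanes $x_i-x_j=l$ for all $1\le i<j\le n$ and all integers $-k+1\le l\le k$. The map $\sigma_n^k$ (defined below) is a bijection between the regions of $\mathcal{S}_n^k$ and the $k$-parking functions on $[n]$.
   Context: A region of an arrangement is a connected component of the complement of the union of its hyperplanes. A $k$-parking function on $[n]$ is a sequence of positive integers $(a_1,\ldots,a_n)$ whose increasing rearrangement $b_1\le\cdots\le b_n$ satisfies $b_i\le 1+k(i-1)$ for all $i$. The diagram of a region $R$ of $\mathcal{S}_n^k$ is defined as follows. Let $y=y_1y_2\cdots y_{kn}$ be the unique ordering of the $kn$ expressions $x_i+m$ ($1\le i\le n$, $0\le m\le k-1$) such that $y_1>y_2>\cdots>y_{kn}$ holds on $R$ (determined by the hyperplanes $x_i-x_j=l$, $-k+1\le l\le k-1$); the position of $y_p$ is $p$. Draw an arc from $x_i+m$ to $x_i+m-1$ for all $i$ and all $0<m\le k-1$, and draw an arc from $x_i$ to $x_j+k-1$ whenever $i<j$ and $x_i-x_j>k$ holds on $R$ (arcs go rightwards). Remove every arc that contains another arc, i.e. an arc from $p$ to $q$ is removed if there is a different arc from $p'$ to $q'$ with $p$ weakly left of $p'$ and $q'$ weakly left of $q$. Replace each $x_i+m$ by $i$. The remaining arcs partition the multiset $\{1^k,2^k,\ldots,n^k\}$ into chains (connected components) of weakly increasing integers, with all $k$ copies of $i$ in the same chain. The map $\sigma_n^k$ sends $R$ to $(a_1,\ldots,a_n)$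 where $a_i$ is the position of the leftmost element of the chain containing the copies of $i$. *)

theory Defs
  imports "HOL-Analysis.Analysis"
begin

text \<open>R^n is modelled as the subspace of nat \<Rightarrow> real (product topology) of points
  whose coordinates outside 1..n vanish; coordinates are x 1, ..., x n.\<close>
definition ambient :: "nat \<Rightarrow> (nat \<Rightarrow> real) set" where
  "ambient n = {x. \<forall>i. i \<notin> {1..n} \<longrightarrow> x i = 0}"

definition shi_hyperplanes :: "nat \<Rightarrow> nat \<Rightarrow> (nat \<Rightarrow> real) set set" where
  "shi_hyperplanes n k = {{x \<in> ambient n. x i - x j = of_int l} | i j l.
      1 \<le> i \<and> i < j \<and> j \<le> n \<and> - int k + 1 \<le> l \<and> l \<le> int k}"

definition shi_complement :: "nat \<Rightarrow> nat \<Rightarrow> (nat \<Rightarrow> real) set" where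
  "shi_complement n k = ambient n - \<Union>(shi_hyperplanes n k)"

definition shi_regions :: "nat \<Rightarrow> nat \<Rightarrow> (nat \<Rightarrow> real) set set" where
  "shi_regions n k = {connected_component_set (shi_complement n k) x | x. x \<in> shi_complement n k}"

text \<open>The diagram. The element (i,m) stands for the expression x_i + m.\<close>
definition dg_elems :: "nat \<Rightarrow> nat \<Rightarrow> (nat \<times> nat) set" where
  "dg_elems n k = {1..n} \<times> {..<k}"

definition dg_val :: "(nat \<Rightarrow> real) \<Rightarrow> nat \<times> nat \<Rightarrow> real" where
  "dg_val x p = x (fst p) + real (snd p)"

text \<open>Position in the decreasing ordering y_1 > y_2 > ... > y_{kn} (1-based).\<close>
definition dg_pos :: "nat \<Rightarrow> nat \<Rightarrow> (nat \<Rightarrow> real) \<Rightarrow> nat \<times> nat \<Rightarrow> nat" where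
  "dg_pos n k x p = Suc (card {q \<in> dg_elems n k. dg_val x q > dg_val x p})"

definition dg_arcs :: "nat \<Rightarrow> nat \<Rightarrow> (nat \<Rightarrow> real) \<Rightarrow> ((nat \<times> nat) \<times> (nat \<times> nat)) set" where
  "dg_arcs n k x =
     {((i, m), (i, m - 1)) | i m. 1 \<le> i \<and> i \<le> n \<and> 0 < m \<and> m \<le> k - 1}
   \<union> {((i, 0), (j, k - 1)) | i j. 1 \<le> i \<and> i < j \<and> j \<le> n \<and> x i - x j > real k}"

text \<open>Remove every arc that contains a different arc.\<close>
definition dg_kept_arcs :: "nat \<Rightarrow> nat \<Rightarrow> (nat \<Rightarrow> real) \<Rightarrow> ((nat \<times> nat) \<times> (nat \<times> nat)) set" where
  "dg_kept_arcs n k x = {(p, q) \<in> dg_arcs n k x.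
     \<not> (\<exists>(p', q') \<in> dg_arcs n k x. (p', q') \<noteq> (p, q) \<and>
          dg_pos n k x p \<le> dg_pos n k x p' \<and> dg_pos n k x q' \<le> dg_pos n k x q)}"

definition dg_chain :: "nat \<Rightarrow> nat \<Rightarrow> (nat \<Rightarrow> real) \<Rightarrow> nat \<times> nat \<Rightarrow> (nat \<times> nat) set" where
  "dg_chain n k x p = {q. (p, q) \<in> (dg_kept_arcs n k x \<union> (dg_kept_arcs n k x)\<inverse>)\<^sup>*}"

definition sigma_pt :: "nat \<Rightarrow> nat \<Rightarrow> (nat \<Rightarrow> real) \<Rightarrow> nat list" where
  "sigma_pt n k x = map (\<lambda>i. Min (dg_pos n k x ` dg_chain n k x (i, 0))) [1..<n+1]"

definition shi_sigma :: "nat \<Rightarrow> nat \<Rightarrow> (nat \<Rightarrow> real) set \<Rightarrow> nat list" where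
  "shi_sigma n k R = sigma_pt n k (SOME x. x \<in> R)"

text \<open>k-parking functions on [n], as lists (a_1,...,a_n); sort a ! (i-1) = b_i.\<close>
definition k_parking :: "nat \<Rightarrow> nat \<Rightarrow> nat list \<Rightarrow> bool" where
  "k_parking n k a \<longleftrightarrow> length a = n \<and> (\<forall>v \<in> set a. 1 \<le> v) \<and>
     (\<forall>i < n. sort a ! i \<le> 1 + k * i)"

end

theory Submission
  imports Defs
begin

(* The regions of S_n^k are the nonempty sign classes of the functionals x_i - x_j - l, so
  shi_sigma is well defined and it suffices to show that the sign vector of a point x and
  sigma(x) determine each other.

  In the diagram of x the kept arcs form vertex-disjoint paths whose vertex sets are the chains,
  and the successor of an element along its path is predicted by a = sigma(x) alone. Hence the
  left-to-right reading of the diagram is recovered from a by a queue discipline: position p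
  holds the leftmost element of a new chain if p is a value of a, and otherwise the successor of
  the earliest element already read whose successor has not been read yet. Positions determine
  all signs, which gives injectivity; counting the elements to the left of a chain start gives
  the k-parking inequalities.

  Conversely, for a k-parking function a the parking inequalities guarantee that the queue never
  runs dry, so the reading produced from a is a permutation of all nk elements. A point realising
  it gives each element the value -(d + phi), where d is the number of arcs from its chain start
  (its level) and phi is a perturbation of order eps^(d+1) that orders elements of equal level;
  every arc then spans a value difference of exactly 1, or slightly more for arcs x_i -> x_j+k-1. *)

section \<open>Regions are sign classes\<close>

definition shi_equiv :: "nat \<Rightarrow> nat \<Rightarrow> (nat \<Rightarrow> real) \<Rightarrow> (nat \<Rightarrow> real) \<Rightarrow> bool" where
  "shi_equiv n k x y \<longleftrightarrow> (\<forall>i j l. 1 \<le> i \<and> i < j \<and> j \<le> n \<and> - int k + 1 \<le> l \<and> l \<le> int k \<longrightarrow>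
      (x i - x j > of_int l \<longleftrightarrow> y i - y j > of_int l))"

lemma shi_equiv_refl: "shi_equiv n k x x"
  unfolding shi_equiv_def by metis

lemma shi_equiv_sym: "shi_equiv n k x y \<Longrightarrow> shi_equiv n k y x"
  unfolding shi_equiv_def by metis

lemma shi_equiv_trans: "shi_equiv n k x y \<Longrightarrow> shi_equiv n k y z \<Longrightarrow> shi_equiv n k x z"
  unfolding shi_equiv_def by metis

lemma shi_complement_iff:
  "x \<in> shi_complement n k \<longleftrightarrow> x \<in> ambient n \<and>
    (\<forall>i j l. 1 \<le> i \<and> i < j \<and> j \<le> n \<and> - int k + 1 \<le> l \<and> l \<le> int k \<longrightarrow> x i - x j \<noteq> of_int l)"
  unfolding shi_complement_def shi_hyperplanes_def by auto

lemma convex_comb_pos: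
  fixes a b t :: real
  assumes "0 < a" "0 < b" "0 \<le> t" "t \<le> 1"
  shows "0 < (1 - t) * a + t * b"
proof -
  have "(1 - t) * min a b \<le> (1 - t) * a" by (rule mult_left_mono) (use assms in auto)
  moreover have "t * min a b \<le> t * b" by (rule mult_left_mono) (use assms in auto)
  moreover have "(1 - t) * min a b + t * min a b = min a b" by (simp add: algebra_simps)
  moreover have "0 < min a b" using assms by simp
  ultimately show ?thesis by linarith
qed

lemma segment_shi_equiv:
  assumes x: "x \<in> shi_complement n k" and y: "y \<in> shi_complement n k" and xy: "shi_equiv n k x y"
    and t: "0 \<le> t" "t \<le> (1::real)"
  shows "(\<lambda>i. (1 - t) * x i + t * y i) \<in> shi_complement n k"
proof -
  let ?z = "\<lambda>i. (1 - t) * x i + t * y i"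
  have "?z i - ?z j \<noteq> of_int l"
    if h: "1 \<le> i" "i < j" "j \<le> n" "- int k + 1 \<le> l" "l \<le> int k" for i j l
  proof -
    have z: "?z i - ?z j - of_int l = (1 - t) * (x i - x j - of_int l) + t * (y i - y j - of_int l)"
      by (simp add: algebra_simps)
    have "x i - x j \<noteq> of_int l" "y i - y j \<noteq> of_int l"
      using x y h unfolding shi_complement_iff by blast+
    moreover have "x i - x j > of_int l \<longleftrightarrow> y i - y j > of_int l"
      using xy h unfolding shi_equiv_def by blast
    ultimately consider "x i - x j > of_int l" "y i - y j > of_int l"
      | "of_int l > x i - x j" "of_int l > y i - y j"
      by linarith
    then show ?thesis
    proof cases
      case 1
      then show ?thesis
        using z t convex_comb_pos[of "x i - x j - of_int l" "y i - y j - of_int l" t] by simp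
    next
      case 2
      then show ?thesis
        using z t convex_comb_pos[of "of_int l - (x i - x j)" "of_int l - (y i - y j)" t]
        by (simp add: algebra_simps)
    qed
  qed
  moreover have "?z \<in> ambient n" using x y unfolding shi_complement_iff ambient_def by auto
  ultimately show ?thesis unfolding shi_complement_iff by blast
qed

lemma shi_equiv_connected:
  assumes x: "x \<in> shi_complement n k" and y: "y \<in> shi_complement n k" and xy: "shi_equiv n k x y"
  shows "y \<in> connected_component_set (shi_complement n k) x"
proof -
  let ?g = "\<lambda>t::real. (\<lambda>i. (1 - t) * x i + t * y i)"
  have "continuous_on {0..1} ?g"
    by (intro continuous_on_coordinatewise_then_product continuous_on_add continuous_on_mult
        continuous_on_const continuous_on_diff continuous_on_id)
  then have "connected (?g ` {0..1})" by (intro connected_continuous_image connected_Icc)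
  moreover have "?g ` {0..1} \<subseteq> shi_complement n k" using segment_shi_equiv[OF x y xy] by auto
  moreover have "x \<in> ?g ` {0..1}" "y \<in> ?g ` {0..1}"
    by (auto intro: image_eqI[where x=0] image_eqI[where x=1])
  ultimately show ?thesis unfolding connected_component_def by blast
qed

lemma connected_pos_iff:
  fixes f :: "'a::topological_space \<Rightarrow> real"
  assumes "connected S" "continuous_on S f" "\<And>z. z \<in> S \<Longrightarrow> f z \<noteq> 0" "x \<in> S" "y \<in> S"
  shows "f x > 0 \<longleftrightarrow> f y > 0"
proof -
  have "connected (f ` S)" using assms(2,1) by (rule connected_continuous_image)
  moreover have "0 \<notin> f ` S" using assms(3) by auto
  ultimately show ?thesis
    using assms(4,5) connectedD_interval[of "f ` S" "f x" "f y" 0]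
      connectedD_interval[of "f ` S" "f y" "f x" 0]
    by (smt (verit) imageI)
qed

lemma connected_shi_equiv:
  assumes x: "x \<in> shi_complement n k" and y: "y \<in> connected_component_set (shi_complement n k) x"
  shows "shi_equiv n k x y"
  unfolding shi_equiv_def
proof (intro allI impI)
  fix i j l assume h: "1 \<le> i \<and> i < j \<and> j \<le> n \<and> - int k + 1 \<le> l \<and> l \<le> int k"
  let ?C = "connected_component_set (shi_complement n k) x"
  let ?f = "\<lambda>z::nat\<Rightarrow>real. z i - z j - of_int l"
  have "continuous_on ?C ?f"
    by (intro continuous_on_diff continuous_on_const
        continuous_on_subset[OF continuous_on_product_coordinates]) auto
  moreover have "?f z \<noteq> 0" if "z \<in> ?C" for z
  proof -
    have "z \<in> shi_complement n k" using that connected_component_subset by blast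
    then show ?thesis using h unfolding shi_complement_iff by auto
  qed
  ultimately have "?f x > 0 \<longleftrightarrow> ?f y > 0"
    using connected_pos_iff[of ?C ?f x y] x y by (simp add: connected_component_refl)
  then show "x i - x j > of_int l \<longleftrightarrow> y i - y j > of_int l" by simp
qed

lemma connected_component_shi_complement:
  assumes "x \<in> shi_complement n k"
  shows "connected_component_set (shi_complement n k) x = {y \<in> shi_complement n k. shi_equiv n k x y}"
  using shi_equiv_connected[OF assms] connected_shi_equiv[OF assms]
    connected_component_subset[of "shi_complement n k" x]
  by blast

lemma shi_regions_eq:
  "shi_regions n k = (\<lambda>x. {y \<in> shi_complement n k. shi_equiv n k x y}) ` shi_complement n k"
  unfolding shi_regions_def using connected_component_shi_complement by blast

lemma rank_less_iff:
  fixes v :: "'a \<Rightarrow> real"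
  assumes "finite S" "p \<in> S" "q \<in> S"
  shows "card {r \<in> S. v r > v p} < card {r \<in> S. v r > v q} \<longleftrightarrow> v p > v q"
proof
  assume "v p > v q"
  then have "{r \<in> S. v r > v p} \<subset> {r \<in> S. v r > v q}" using assms(2) by auto
  then show "card {r \<in> S. v r > v p} < card {r \<in> S. v r > v q}"
    by (intro psubset_card_mono) (use assms in auto)
next
  assume "card {r \<in> S. v r > v p} < card {r \<in> S. v r > v q}"
  moreover have "v q \<ge> v p \<Longrightarrow> card {r \<in> S. v r > v q} \<le> card {r \<in> S. v r > v p}"
    by (intro card_mono) (use assms in auto)
  ultimately show "v p > v q" by linarith
qed

lemma bij_betw_rank:
  fixes v :: "'a \<Rightarrow> real"
  assumes fin: "finite S" and inj: "inj_on v S"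
  shows "bij_betw (\<lambda>p. Suc (card {r \<in> S. v r > v p})) S {1..card S}"
proof -
  let ?f = "\<lambda>p. Suc (card {r \<in> S. v r > v p})"
  have "inj_on ?f S"
  proof (rule inj_onI)
    fix p q assume p: "p \<in> S" and q: "q \<in> S" and "?f p = ?f q"
    then have "\<not> v p > v q" "\<not> v q > v p"
      using rank_less_iff[OF fin p q, of v] rank_less_iff[OF fin q p, of v] by auto
    then show "p = q" using inj p q by (meson inj_onD linorder_neqE_linordered_idom)
  qed
  moreover have "?f ` S \<subseteq> {1..card S}"
  proof
    fix y assume "y \<in> ?f ` S"
    then obtain p where p: "p \<in> S" and y: "y = ?f p" by auto
    have "card {r \<in> S. v r > v p} \<le> card (S - {p})" by (intro card_mono) (use fin in auto)
    also have "\<dots> = card S - 1" using p fin by simp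
    finally show "y \<in> {1..card S}" using y p fin card_gt_0_iff[of S] by auto
  qed
  ultimately have "?f ` S = {1..card S}" by (intro card_subset_eq) (auto simp: card_image)
  with \<open>inj_on ?f S\<close> show ?thesis unfolding bij_betw_def by simp
qed

lemma mem_dg_elems: "(i, m) \<in> dg_elems n k \<longleftrightarrow> 1 \<le> i \<and> i \<le> n \<and> m < k"
  unfolding dg_elems_def by auto

lemma finite_dg_elems: "finite (dg_elems n k)"
  unfolding dg_elems_def by simp

lemma card_dg_elems: "card (dg_elems n k) = n * k"
  unfolding dg_elems_def by (simp add: card_cartesian_product)

locale shi_point =
  fixes n k :: nat and x :: "nat \<Rightarrow> real"
  assumes k1: "1 \<le> k" and xc: "x \<in> shi_complement n k"
begin

abbreviation "E \<equiv> dg_elems n k"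
abbreviation "pos \<equiv> dg_pos n k x"
abbreviation "val \<equiv> dg_val x"
abbreviation "Arc \<equiv> dg_arcs n k x"
abbreviation "K \<equiv> dg_kept_arcs n k x"
abbreviation "chain_of \<equiv> dg_chain n k x"

lemma diff_neq_int:
  "1 \<le> i \<Longrightarrow> i < j \<Longrightarrow> j \<le> n \<Longrightarrow> - int k + 1 \<le> l \<Longrightarrow> l \<le> int k \<Longrightarrow> x i - x j \<noteq> of_int l"
  using xc unfolding shi_complement_iff by blast

lemma inj_on_dg_val: "inj_on val E"
proof (rule inj_onI, clarify)
  fix i m j m' assume "(i, m) \<in> E" "(j, m') \<in> E" and val: "val (i, m) = val (j, m')"
  then have h: "1 \<le> i" "i \<le> n" "m < k" "1 \<le> j" "j \<le> n" "m' < k" by (auto simp: mem_dg_elems)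
  have e: "x i + real m = x j + real m'" using val unfolding dg_val_def by simp
  have "i = j"
  proof (rule ccontr)
    assume "i \<noteq> j"
    then consider "i < j" | "j < i" by linarith
    then show False
      using diff_neq_int[of i j "int m' - int m"] diff_neq_int[of j i "int m - int m'"] h e
      by cases auto
  qed
  then show "i = j \<and> m = m'" using e by simp
qed

lemma pos_less_iff: "p \<in> E \<Longrightarrow> q \<in> E \<Longrightarrow> pos p < pos q \<longleftrightarrow> val p > val q"
  unfolding dg_pos_def using rank_less_iff[OF finite_dg_elems] by simp

lemma bij_betw_pos: "bij_betw pos E {1..n*k}"
  unfolding dg_pos_def using bij_betw_rank[OF finite_dg_elems inj_on_dg_val] card_dg_elems by simp

lemma pos_inj: "p \<in> E \<Longrightarrow> q \<in> E \<Longrightarrow> pos p = pos q \<Longrightarrow> p = q"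
  using bij_betw_pos unfolding bij_betw_def inj_on_def by blast

lemma pos_range: "p \<in> E \<Longrightarrow> 1 \<le> pos p \<and> pos p \<le> n * k"
  using bij_betw_pos unfolding bij_betw_def by auto

lemma pos_surj: "1 \<le> q \<Longrightarrow> q \<le> n * k \<Longrightarrow> \<exists>e\<in>E. pos e = q"
  using bij_betw_pos unfolding bij_betw_def by (metis atLeastAtMost_iff imageE)

lemma pos_le_iff: "p \<in> E \<Longrightarrow> q \<in> E \<Longrightarrow> pos p \<le> pos q \<longleftrightarrow> val p \<ge> val q"
  using pos_less_iff[of q p] by linarith

lemma dg_arcs_iff:
  "(p, q) \<in> Arc \<longleftrightarrow> (\<exists>i m. p = (i, m) \<and> q = (i, m - 1) \<and> 1 \<le> i \<and> i \<le> n \<and> 0 < m \<and> m \<le> k - 1)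
     \<or> (\<exists>i j. p = (i, 0) \<and> q = (j, k - 1) \<and> 1 \<le> i \<and> i < j \<and> j \<le> n \<and> x i - x j > real k)"
  unfolding dg_arcs_def by blast

lemma arc_elems: "(p, q) \<in> Arc \<Longrightarrow> p \<in> E \<and> q \<in> E"
  unfolding dg_arcs_iff using k1 by (auto simp: mem_dg_elems)

lemma arc_val_gap: "(p, q) \<in> Arc \<Longrightarrow> val p - val q \<ge> 1"
  unfolding dg_arcs_iff dg_val_def using k1 by (auto simp: of_nat_diff)

lemma arc_pos_less: "(p, q) \<in> Arc \<Longrightarrow> pos p < pos q"
  using arc_val_gap[of p q] arc_elems[of p q] pos_less_iff by auto

lemma arc_fst_le: "(p, q) \<in> Arc \<Longrightarrow> fst p \<le> fst q"
  unfolding dg_arcs_iff by auto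

lemma kept_iff: "(p, q) \<in> K \<longleftrightarrow> (p, q) \<in> Arc \<and>
   \<not> (\<exists>p' q'. (p', q') \<in> Arc \<and> (p', q') \<noteq> (p, q) \<and> pos p \<le> pos p' \<and> pos q' \<le> pos q)"
  unfolding dg_kept_arcs_def by blast

lemma kept_arc: "(p, q) \<in> K \<Longrightarrow> (p, q) \<in> Arc" using kept_iff by blast

lemma copy_arc: "1 \<le> i \<Longrightarrow> i \<le> n \<Longrightarrow> 0 < m \<Longrightarrow> m < k \<Longrightarrow> ((i, m), (i, m - 1)) \<in> Arc"
  unfolding dg_arcs_iff by auto

lemma copy_arc_kept:
  assumes h: "1 \<le> i" "i \<le> n" "0 < m" "m < k"
  shows "((i, m), (i, m - 1)) \<in> K"
  unfolding kept_iff
proof (intro conjI notI)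
  show "((i, m), (i, m - 1)) \<in> Arc" using copy_arc h by blast
next
  assume "\<exists>p' q'. (p', q') \<in> Arc \<and> (p', q') \<noteq> ((i, m), (i, m - 1)) \<and>
    pos (i, m) \<le> pos p' \<and> pos q' \<le> pos (i, m - 1)"
  then obtain p' q' where arc: "(p', q') \<in> Arc" and ne: "(p', q') \<noteq> ((i, m), (i, m - 1))"
    and le: "pos (i, m) \<le> pos p'" "pos q' \<le> pos (i, m - 1)"
    by blast
  have E: "(i, m) \<in> E" "(i, m - 1) \<in> E" "p' \<in> E" "q' \<in> E"
    using h arc_elems[OF arc] by (auto simp: mem_dg_elems)
  have "val p' \<le> val (i, m)" "val (i, m - 1) \<le> val q'"
    using le pos_le_iff E by auto
  moreover have "val (i, m) - val (i, m - 1) = 1" using h by (simp add: dg_val_def of_nat_diff)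
  moreover have "val p' - val q' \<ge> 1" using arc_val_gap[OF arc] .
  ultimately have "val p' = val (i, m)" "val q' = val (i, m - 1)" by linarith+
  then have "p' = (i, m)" "q' = (i, m - 1)" using inj_onD[OF inj_on_dg_val] E by blast+
  with ne show False by simp
qed

lemma kept_in_unique: "(u, v) \<in> K \<Longrightarrow> (u', v) \<in> K \<Longrightarrow> u = u'"
proof (rule ccontr)
  assume a: "(u, v) \<in> K" "(u', v) \<in> K" "u \<noteq> u'"
  have E: "u \<in> E" "u' \<in> E" using a arc_elems kept_arc by blast+
  then have "pos u \<noteq> pos u'" using pos_inj a(3) by blast
  then have "pos u < pos u' \<or> pos u' < pos u" by linarith
  then show False
  proof
    assume "pos u < pos u'"
    then have "pos u \<le> pos u'" "pos v \<le> pos v" "(u', v) \<noteq> (u, v)" using a(3) by auto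
    then show False using a(1) kept_arc[OF a(2)] unfolding kept_iff by blast
  next
    assume "pos u' < pos u"
    then have "pos u' \<le> pos u" "pos v \<le> pos v" "(u, v) \<noteq> (u', v)" using a(3) by auto
    then show False using a(2) kept_arc[OF a(1)] unfolding kept_iff by blast
  qed
qed

lemma kept_out_unique: "(u, v) \<in> K \<Longrightarrow> (u, v') \<in> K \<Longrightarrow> v = v'"
proof (rule ccontr)
  assume a: "(u, v) \<in> K" "(u, v') \<in> K" "v \<noteq> v'"
  have E: "v \<in> E" "v' \<in> E" using a arc_elems kept_arc by blast+
  then have "pos v \<noteq> pos v'" using pos_inj a(3) by blast
  then have "pos v < pos v' \<or> pos v' < pos v" by linarith
  then show False
  proof
    assume "pos v < pos v'"
    then have "pos u \<le> pos u" "pos v \<le> pos v'" "(u, v) \<noteq> (u, v')" using a(3) by auto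
    then show False using a(2) kept_arc[OF a(1)] unfolding kept_iff by blast
  next
    assume "pos v' < pos v"
    then have "pos u \<le> pos u" "pos v' \<le> pos v" "(u, v') \<noteq> (u, v)" using a(3) by auto
    then show False using a(1) kept_arc[OF a(2)] unfolding kept_iff by blast
  qed
qed

end

section \<open>Reading a diagram from its labels\<close>

definition entry :: "nat list \<Rightarrow> nat \<Rightarrow> nat" where
  "entry a i = a ! (i - 1)"

text \<open>The successor of an element along the kept arcs, as predicted by the labels \<open>A\<close>
  alone (see \<open>chain_next_kept\<close>).\<close>
definition chain_next :: "(nat \<Rightarrow> nat) \<Rightarrow> nat \<Rightarrow> nat \<Rightarrow> nat \<times> nat \<Rightarrow> (nat \<times> nat) option" where
  "chain_next A n k e = (if 0 < snd e then Some (fst e, snd e - 1)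
     else if (\<exists>j. fst e < j \<and> j \<le> n \<and> A j = A (fst e))
     then Some (LEAST j. fst e < j \<and> j \<le> n \<and> A j = A (fst e), k - 1) else None)"

definition is_start :: "(nat \<Rightarrow> nat) \<Rightarrow> nat \<Rightarrow> nat \<Rightarrow> bool" where
  "is_start A n p \<longleftrightarrow> (\<exists>i. 1 \<le> i \<and> i \<le> n \<and> A i = p)"

definition first_index :: "(nat \<Rightarrow> nat) \<Rightarrow> nat \<Rightarrow> nat \<Rightarrow> nat" where
  "first_index A n p = (LEAST i. 1 \<le> i \<and> i \<le> n \<and> A i = p)"

definition pending :: "(nat \<Rightarrow> nat) \<Rightarrow> nat \<Rightarrow> nat \<Rightarrow> (nat \<times> nat) list \<Rightarrow> (nat \<times> nat) list" where
  "pending A n k w = filter (\<lambda>e. chain_next A n k e \<noteq> None \<and> the (chain_next A n k e) \<notin> set w) w"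

definition next_elem :: "(nat \<Rightarrow> nat) \<Rightarrow> nat \<Rightarrow> nat \<Rightarrow> (nat \<times> nat) list \<Rightarrow> nat \<Rightarrow> nat \<times> nat" where
  "next_elem A n k w p = (if is_start A n p then (first_index A n p, k - 1)
      else the (chain_next A n k (hd (pending A n k w))))"

text \<open>The elements at positions \<open>1, \<dots>, p\<close> of the diagram, computed from the labels only.\<close>
primrec rebuild :: "(nat \<Rightarrow> nat) \<Rightarrow> nat \<Rightarrow> nat \<Rightarrow> nat \<Rightarrow> (nat \<times> nat) list" where
  "rebuild A n k 0 = []"
| "rebuild A n k (Suc p) = rebuild A n k p @ [next_elem A n k (rebuild A n k p) (Suc p)]"

lemma length_rebuild: "length (rebuild A n k p) = p"
  by (induction p) auto

lemma take_rebuild: "q \<le> p \<Longrightarrow> take q (rebuild A n k p) = rebuild A n k q"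
  by (induction p) (auto simp: length_rebuild le_Suc_eq)

lemma nth_rebuild: "q < p \<Longrightarrow> rebuild A n k p ! q = next_elem A n k (rebuild A n k q) (Suc q)"
  by (metis take_rebuild Suc_leI length_rebuild lessI nth_append_length nth_take rebuild.simps(2))

lemma hd_filter_eq_nth:
  "i < length w \<Longrightarrow> P (w ! i) \<Longrightarrow> (\<forall>j<i. \<not> P (w ! j)) \<Longrightarrow> hd (filter P w) = w ! i"
proof (induction w arbitrary: i)
  case Nil then show ?case by simp
next
  case (Cons a w)
  show ?case
  proof (cases i)
    case 0 then show ?thesis using Cons.prems by simp
  next
    case (Suc i')
    have "\<forall>j<i'. \<not> P (w ! j)" using Cons.prems(3) Suc by auto
    then show ?thesis using Cons Suc by auto
  qed
qed

lemma hd_filter_nth_ex: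
  "filter P w \<noteq> [] \<Longrightarrow> \<exists>i<length w. hd (filter P w) = w ! i \<and> P (w ! i) \<and> (\<forall>j<i. \<not> P (w ! j))"
proof (induction w)
  case Nil then show ?case by simp
next
  case (Cons b w)
  show ?case
  proof (cases "P b")
    case True
    then show ?thesis by (intro exI[of _ 0]) simp
  next
    case False
    with Cons obtain i where "i < length w" "hd (filter P w) = w ! i" "P (w ! i)" "\<forall>j<i. \<not> P (w ! j)"
      by auto
    with False show ?thesis by (intro exI[of _ "Suc i"]) (auto simp: less_Suc_eq_0_disj)
  qed
qed

lemma rtrancl_sym_closure_from_source:
  assumes "single_valued (r\<inverse>)" and "\<And>u. (u, e) \<notin> r" and "(e, q) \<in> (r \<union> r\<inverse>)\<^sup>*"
  shows "(e, q) \<in> r\<^sup>*"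
  using assms(3)
proof (induction rule: rtrancl_induct)
  case base then show ?case by simp
next
  case (step y z)
  from step.hyps(2) show ?case
  proof
    assume "(y, z) \<in> r" then show ?thesis using step.IH by simp
  next
    assume zy: "(y, z) \<in> r\<inverse>"
    then have "y \<noteq> e" using assms(2) by blast
    then obtain w where "(e, w) \<in> r\<^sup>*" "(w, y) \<in> r"
      using step.IH by (metis rtranclD tranclD2)
    moreover have "w = z" using single_valuedD[OF assms(1)] zy calculation(2) by blast
    ultimately show ?thesis by simp
  qed
qed

context shi_point
begin

lemma single_valued_kept: "single_valued K"
  using kept_out_unique by (auto intro: single_valuedI)

lemma single_valued_kept_converse: "single_valued (K\<inverse>)"
  using kept_in_unique by (auto intro: single_valuedI)

definition A :: "nat \<Rightarrow> nat" where
  "A = entry (sigma_pt n k x)"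

lemma chain_iff: "q \<in> chain_of e \<longleftrightarrow> (e, q) \<in> (K \<union> K\<inverse>)\<^sup>*"
  unfolding dg_chain_def by simp

lemma chain_refl: "e \<in> chain_of e"
  unfolding chain_iff by simp

lemma chain_sym:
  assumes "q \<in> chain_of e"
  shows "e \<in> chain_of q"
proof -
  have "(q, e) \<in> ((K \<union> K\<inverse>)\<inverse>)\<^sup>*" using assms unfolding chain_iff by (rule rtrancl_converseI)
  moreover have "(K \<union> K\<inverse>)\<inverse> = K \<union> K\<inverse>" by auto
  ultimately show ?thesis unfolding chain_iff by simp
qed

lemma chain_trans: "q \<in> chain_of e \<Longrightarrow> r \<in> chain_of q \<Longrightarrow> r \<in> chain_of e"
  unfolding chain_iff by (rule rtrancl_trans)

lemma chain_eq: "q \<in> chain_of e \<Longrightarrow> chain_of q = chain_of e"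
  using chain_sym chain_trans by blast

lemma kept_chain: "(p, q) \<in> K \<Longrightarrow> q \<in> chain_of p"
  unfolding chain_iff by (simp add: r_into_rtrancl)

lemma chain_elems:
  assumes "e \<in> E"
  shows "chain_of e \<subseteq> E"
proof
  fix q assume "q \<in> chain_of e"
  then have "(e, q) \<in> (K \<union> K\<inverse>)\<^sup>*" unfolding chain_iff .
  then show "q \<in> E"
  proof (induction rule: rtrancl_induct)
    case base then show ?case using assms .
  next
    case (step y z) then show ?case using arc_elems kept_arc by blast
  qed
qed

lemma finite_chain: "e \<in> E \<Longrightarrow> finite (chain_of e)"
  using chain_elems finite_dg_elems finite_subset by blast

lemma first_copy_elem: "1 \<le> i \<Longrightarrow> i \<le> n \<Longrightarrow> (i, 0) \<in> E"
  using k1 by (simp add: mem_dg_elems)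

lemma copies_in_chain:
  assumes "1 \<le> i" "i \<le> n" "m < k"
  shows "(i, m) \<in> chain_of (i, 0)"
  using assms(3)
proof (induction m)
  case 0 show ?case by (rule chain_refl)
next
  case (Suc m)
  then have "((i, Suc m), (i, m)) \<in> K" using copy_arc_kept[of i "Suc m"] assms by simp
  then have "(i, Suc m) \<in> chain_of (i, m)" using kept_chain chain_sym by blast
  moreover have "(i, m) \<in> chain_of (i, 0)" using Suc by simp
  ultimately show ?case using chain_trans by blast
qed

lemma chain_copy: "(i, m) \<in> E \<Longrightarrow> chain_of (i, m) = chain_of (i, 0)"
  using copies_in_chain[of i m] chain_eq by (simp add: mem_dg_elems)

lemma A_eq:
  assumes "1 \<le> i" "i \<le> n"
  shows "A i = Min (pos ` chain_of (i, 0))"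
proof -
  have "A i = sigma_pt n k x ! (i - 1)" unfolding A_def entry_def ..
  also have "\<dots> = Min (pos ` chain_of ([1..<n+1] ! (i - 1), 0))"
    unfolding sigma_pt_def using assms by (intro nth_map) simp
  also have "[1..<n+1] ! (i - 1) = i" using assms by (subst nth_upt) auto
  finally show ?thesis .
qed

lemma A_in_pos_chain:
  assumes "1 \<le> i" "i \<le> n"
  shows "A i \<in> pos ` chain_of (i, 0)"
  unfolding A_eq[OF assms] using finite_chain[OF first_copy_elem[OF assms]] chain_refl
  by (intro Min_in) auto

lemma A_le_pos_chain:
  assumes "1 \<le> i" "i \<le> n" "q \<in> chain_of (i, 0)"
  shows "A i \<le> pos q"
  unfolding A_eq[OF assms(1,2)] using finite_chain[OF first_copy_elem[OF assms(1,2)]] assms(3)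
  by (intro Min_le) auto

lemma chain_eq_if_A_eq:
  assumes "1 \<le> i" "i \<le> n" "1 \<le> j" "j \<le> n" "A i = A j"
  shows "chain_of (i, 0) = chain_of (j, 0)"
proof -
  obtain e where e: "e \<in> chain_of (i, 0)" "pos e = A i" using A_in_pos_chain[OF assms(1,2)] by auto
  obtain e' where e': "e' \<in> chain_of (j, 0)" "pos e' = A j" using A_in_pos_chain[OF assms(3,4)] by auto
  have "e \<in> E" "e' \<in> E" using e e' chain_elems first_copy_elem assms by blast+
  then have "e = e'" using pos_inj e e' assms(5) by simp
  then show ?thesis using chain_eq[OF e(1)] chain_eq[OF e'(1)] by simp
qed

lemma chain_eq_class:
  assumes i: "1 \<le> i" "i \<le> n"
  shows "chain_of (i, 0) = {(j, m). 1 \<le> j \<and> j \<le> n \<and> m < k \<and> A j = A i}"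
proof (intro set_eqI iffI)
  fix q assume q: "q \<in> chain_of (i, 0)"
  obtain j m where jm: "q = (j, m)" by fastforce
  have "q \<in> E" using q chain_elems first_copy_elem i by blast
  then have h: "1 \<le> j" "j \<le> n" "m < k" using jm mem_dg_elems by auto
  have "chain_of (j, 0) = chain_of (i, 0)" using chain_copy \<open>q \<in> E\<close> jm chain_eq[OF q] by simp
  then show "q \<in> {(j, m). 1 \<le> j \<and> j \<le> n \<and> m < k \<and> A j = A i}" using A_eq h i jm by simp
next
  fix q assume "q \<in> {(j, m). 1 \<le> j \<and> j \<le> n \<and> m < k \<and> A j = A i}"
  then obtain j m where h: "q = (j, m)" "1 \<le> j" "j \<le> n" "m < k" "A j = A i" by blast
  then show "q \<in> chain_of (i, 0)"
    using chain_eq_if_A_eq[OF h(2,3) i h(5)] copies_in_chain[OF h(2,3,4)] by simp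
qed

lemma kept_rtrancl_mono: "(p, q) \<in> K\<^sup>* \<Longrightarrow> pos p \<le> pos q \<and> fst p \<le> fst q"
proof (induction rule: rtrancl_induct)
  case (step y z)
  then show ?case using arc_pos_less[OF kept_arc[OF step(2)]] arc_fst_le[OF kept_arc[OF step(2)]] by linarith
qed simp

lemma leftmost_no_pred:
  assumes i: "1 \<le> i" "i \<le> n" and e0: "e0 \<in> chain_of (i, 0)" "pos e0 = A i"
  shows "(u, e0) \<notin> K"
proof
  assume u: "(u, e0) \<in> K"
  then have "u \<in> chain_of (i, 0)" using kept_chain chain_sym chain_trans e0(1) by blast
  then have "A i \<le> pos u" using A_le_pos_chain i by blast
  moreover have "pos u < pos e0" using arc_pos_less kept_arc u by blast
  ultimately show False using e0 by simp
qed

lemma leftmost_reaches: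
  assumes i: "1 \<le> i" "i \<le> n" and e0: "e0 \<in> chain_of (i, 0)" "pos e0 = A i"
    and v: "v \<in> chain_of (i, 0)"
  shows "(e0, v) \<in> K\<^sup>*"
proof -
  have "(e0, v) \<in> (K \<union> K\<inverse>)\<^sup>*" using chain_eq[OF e0(1)] v chain_iff by blast
  then show ?thesis
    using rtrancl_sym_closure_from_source[OF single_valued_kept_converse leftmost_no_pred[OF i e0]]
    by blast
qed

lemma leftmost_elem_eq:
  assumes i: "1 \<le> i" "i \<le> n" and e0: "e0 \<in> chain_of (i, 0)" "pos e0 = A i"
  shows "e0 = (first_index A n (A i), k - 1)"
proof -
  have "e0 \<in> E" using e0 chain_elems first_copy_elem i by blast
  obtain j0 m0 where jm: "e0 = (j0, m0)" by fastforce
  have h: "1 \<le> j0" "j0 \<le> n" "m0 < k" using \<open>e0 \<in> E\<close> jm mem_dg_elems by auto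
  have "m0 = k - 1"
  proof (rule ccontr)
    assume "m0 \<noteq> k - 1"
    then have "((j0, Suc m0), (j0, m0)) \<in> K" using copy_arc_kept[of j0 "Suc m0"] h by simp
    then show False using leftmost_no_pred[OF i e0] jm by blast
  qed
  moreover have "first_index A n (A i) = j0"
    unfolding first_index_def
  proof (rule Least_equality)
    show "1 \<le> j0 \<and> j0 \<le> n \<and> A j0 = A i" using h e0(1) jm chain_eq_class[OF i] by simp
  next
    fix j assume "1 \<le> j \<and> j \<le> n \<and> A j = A i"
    then have "(j, 0) \<in> chain_of (i, 0)" using chain_eq_class[OF i] k1 by auto
    then have "(e0, (j, 0)) \<in> K\<^sup>*" using leftmost_reaches[OF i e0] by blast
    then show "j0 \<le> j" using kept_rtrancl_mono jm by fastforce
  qed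
  ultimately show ?thesis using jm by simp
qed

lemma start_elem:
  assumes "is_start A n p"
  shows "(first_index A n p, k - 1) \<in> E \<and> pos (first_index A n p, k - 1) = p"
proof -
  obtain i where i: "1 \<le> i" "i \<le> n" "A i = p" using assms unfolding is_start_def by blast
  obtain e0 where e0: "e0 \<in> chain_of (i, 0)" "pos e0 = A i" using A_in_pos_chain[OF i(1,2)] by auto
  then have "e0 = (first_index A n p, k - 1)" using leftmost_elem_eq[OF i(1,2)] i(3) by simp
  moreover have "e0 \<in> E" using e0(1) chain_elems first_copy_elem i by blast
  ultimately show ?thesis using e0(2) i(3) by simp
qed

lemma nonstart_has_pred:
  assumes e: "e \<in> E" and ns: "\<not> is_start A n (pos e)"
  shows "\<exists>u. (u, e) \<in> K"
proof -
  obtain j m where jm: "e = (j, m)" by fastforce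
  have h: "1 \<le> j" "j \<le> n" using e jm mem_dg_elems by auto
  obtain e0 where e0: "e0 \<in> chain_of (j, 0)" "pos e0 = A j" using A_in_pos_chain[OF h] by auto
  have "e \<noteq> e0"
  proof
    assume "e = e0"
    then show False using ns h e0(2) unfolding is_start_def by auto
  qed
  moreover have "e \<in> chain_of (j, 0)" using chain_refl[of e] chain_copy[of j m] e jm by simp
  then have "(e0, e) \<in> K\<^sup>*" using leftmost_reaches[OF h e0] by blast
  ultimately have "(e0, e) \<in> K\<^sup>+" by (simp add: rtrancl_eq_or_trancl)
  then show ?thesis by (meson tranclD2)
qed

lemma chain_path_if_fst_less:
  assumes i: "1 \<le> i" "i \<le> n" and uv: "u \<in> chain_of (i, 0)" "v \<in> chain_of (i, 0)" "fst u < fst v"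
  shows "\<exists>w. (u, w) \<in> K \<and> (w, v) \<in> K\<^sup>*"
proof -
  obtain e0 where e0: "e0 \<in> chain_of (i, 0)" "pos e0 = A i" using A_in_pos_chain[OF i] by auto
  then have "(e0, u) \<in> K\<^sup>*" "(e0, v) \<in> K\<^sup>*" using leftmost_reaches[OF i] uv by auto
  then have "(u, v) \<in> K\<^sup>* \<or> (v, u) \<in> K\<^sup>*" by (rule single_valued_confluent[OF single_valued_kept])
  moreover have "(v, u) \<notin> K\<^sup>*"
  proof
    assume "(v, u) \<in> K\<^sup>*"
    then have "fst v \<le> fst u" using kept_rtrancl_mono by blast
    with uv(3) show False by simp
  qed
  moreover have "u \<noteq> v" using uv(3) by blast
  ultimately have "(u, v) \<in> K\<^sup>+" by (simp add: rtrancl_eq_or_trancl)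
  then show ?thesis by (rule tranclD)
qed

lemma kept_of_chain_next:
  assumes v: "v \<in> E" and s: "chain_next A n k v \<noteq> None"
  shows "\<exists>w. (v, w) \<in> K"
proof -
  obtain i m where im: "v = (i, m)" by fastforce
  have h: "1 \<le> i" "i \<le> n" "m < k" using v im mem_dg_elems by auto
  show ?thesis
  proof (cases "0 < m")
    case True
    then show ?thesis using copy_arc_kept[of i m] h im by auto
  next
    case False
    then obtain j where j: "i < j" "j \<le> n" "A j = A i"
      using s im unfolding chain_next_def by (auto split: if_splits)
    then have "(j, 0) \<in> chain_of (i, 0)" using chain_eq_class[OF h(1,2)] h k1 by auto
    moreover have "fst (i, 0) < fst (j, 0)" using j(1) by simp
    ultimately have "\<exists>w. ((i, 0), w) \<in> K \<and> (w, (j, 0)) \<in> K\<^sup>*"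
      by (rule chain_path_if_fst_less[OF h(1,2) chain_refl])
    then show ?thesis using im False by auto
  qed
qed

lemma chain_next_kept:
  assumes v: "v \<in> E" and vw: "(v, w) \<in> K"
  shows "chain_next A n k v = Some w"
proof -
  obtain i m where im: "v = (i, m)" by fastforce
  have h: "1 \<le> i" "i \<le> n" "m < k" using v im mem_dg_elems by auto
  show ?thesis
  proof (cases "0 < m")
    case True
    have "(v, (i, m - 1)) \<in> K" using copy_arc_kept[of i m] h True im by simp
    then have "w = (i, m - 1)" using kept_out_unique vw by blast
    then show ?thesis unfolding chain_next_def using im True by simp
  next
    case False
    then obtain j where j: "w = (j, k - 1)" "i < j" "j \<le> n"
      using kept_arc[OF vw] im unfolding dg_arcs_iff by auto
    have "A j = A i" using kept_chain[OF vw] im False j chain_eq_class[OF h(1,2)] by simp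
    moreover have "j \<le> j'" if j': "i < j'" "j' \<le> n" "A j' = A i" for j'
    proof -
      have "(j', k - 1) \<in> chain_of (i, 0)" using chain_eq_class[OF h(1,2)] j' k1 by auto
      moreover have "fst (i, 0) < fst (j', k - 1)" using j'(1) by simp
      ultimately have "\<exists>w'. ((i, 0), w') \<in> K \<and> (w', (j', k - 1)) \<in> K\<^sup>*"
        by (rule chain_path_if_fst_less[OF h(1,2) chain_refl])
      then obtain w' where "((i, 0), w') \<in> K" "(w', (j', k - 1)) \<in> K\<^sup>*" by blast
      moreover have "w' = w" using kept_out_unique vw im False calculation(1) by simp
      ultimately show ?thesis using kept_rtrancl_mono j by fastforce
    qed
    ultimately have "(LEAST j'. i < j' \<and> j' \<le> n \<and> A j' = A i) = j"
      using j by (intro Least_equality) auto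
    then show ?thesis unfolding chain_next_def using im False j \<open>A j = A i\<close> by auto
  qed
qed

end

lemma chain_next_elems:
  assumes k1: "1 \<le> k" and e: "e \<in> dg_elems n k" and s: "chain_next A n k e = Some w"
  shows "w \<in> dg_elems n k"
proof -
  obtain i m where im: "e = (i, m)" by fastforce
  have h: "1 \<le> i" "i \<le> n" "m < k" using e im by (auto simp: mem_dg_elems)
  show ?thesis
  proof (cases "0 < m")
    case True
    then have "w = (i, m - 1)" using s im unfolding chain_next_def by simp
    then show ?thesis using h by (auto simp: mem_dg_elems)
  next
    case False
    then have ex: "\<exists>j. i < j \<and> j \<le> n \<and> A j = A i"
      and w: "w = (LEAST j. i < j \<and> j \<le> n \<and> A j = A i, k - 1)"
      using s im unfolding chain_next_def by (auto split: if_splits)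
    have "i < (LEAST j. i < j \<and> j \<le> n \<and> A j = A i)" "(LEAST j. i < j \<and> j \<le> n \<and> A j = A i) \<le> n"
      using LeastI_ex[OF ex] by simp_all
    then show ?thesis using w h k1 by (auto simp: mem_dg_elems)
  qed
qed

lemma card_entry_set:
  assumes "length a = n"
  shows "card {j. 1 \<le> j \<and> j \<le> n \<and> P (entry a j)} = length (filter P a)"
proof -
  have "{j. 1 \<le> j \<and> j \<le> n \<and> P (entry a j)} = Suc ` {i. i < length a \<and> P (a ! i)}"
  proof (intro set_eqI iffI)
    fix j assume "j \<in> {j. 1 \<le> j \<and> j \<le> n \<and> P (entry a j)}"
    then show "j \<in> Suc ` {i. i < length a \<and> P (a ! i)}"
      using assms unfolding entry_def by (auto intro!: image_eqI[of _ _ "j - 1"])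
  qed (use assms in \<open>auto simp: entry_def\<close>)
  then show ?thesis by (simp add: card_image length_filter_conv_card)
qed

lemma length_filter_less_sort_nth:
  fixes a :: "nat list"
  assumes "c < length a"
  shows "length (filter (\<lambda>v. v < sort a ! c) a) \<le> c"
proof -
  let ?s = "sort a"
  have "{i. i < length ?s \<and> ?s ! i < ?s ! c} \<subseteq> {..<c}"
    using sorted_nth_mono[OF sorted_sort, of c] by (auto simp: not_less[symmetric])
  then have "card {i. i < length ?s \<and> ?s ! i < ?s ! c} \<le> c"
    using card_mono[of "{..<c}"] by fastforce
  moreover have "length (filter (\<lambda>v. v < ?s ! c) a) = length (filter (\<lambda>v. v < ?s ! c) ?s)"
    by (simp add: filter_sort)
  ultimately show ?thesis by (simp add: length_filter_conv_card)
qed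

lemma length_filter_le_sort_nth:
  fixes a :: "nat list"
  assumes "c < length a" and "sort a ! c \<le> v"
  shows "Suc c \<le> length (filter (\<lambda>u. u \<le> v) a)"
proof -
  let ?s = "sort a"
  have "{..c} \<subseteq> {i. i < length ?s \<and> ?s ! i \<le> v}"
    using assms sorted_nth_mono[OF sorted_sort, of _ c a] by fastforce
  then have "Suc c \<le> card {i. i < length ?s \<and> ?s ! i \<le> v}"
    using card_mono[of "{i. i < length ?s \<and> ?s ! i \<le> v}" "{..c}"] by simp
  moreover have "length (filter (\<lambda>u. u \<le> v) a) = length (filter (\<lambda>u. u \<le> v) ?s)"
    by (simp add: filter_sort)
  ultimately show ?thesis by (simp add: length_filter_conv_card)
qed

section \<open>A point is determined up to its region by its labels\<close>

context shi_point
begin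

definition reads :: "(nat \<times> nat) list \<Rightarrow> bool" where
  "reads w \<longleftrightarrow> (\<forall>q < length w. w ! q \<in> E \<and> pos (w ! q) = Suc q)"

lemma set_reads:
  assumes "reads w"
  shows "v \<in> set w \<longleftrightarrow> v \<in> E \<and> pos v \<le> length w"
proof
  assume "v \<in> set w"
  then obtain q where "q < length w" "v = w ! q" by (metis in_set_conv_nth)
  then show "v \<in> E \<and> pos v \<le> length w" using assms unfolding reads_def by auto
next
  assume v: "v \<in> E \<and> pos v \<le> length w"
  have "1 \<le> pos v" using pos_range v by blast
  then have q: "pos v - 1 < length w" using v by linarith
  have "pos (w ! (pos v - 1)) = Suc (pos v - 1)" "w ! (pos v - 1) \<in> E"
    using assms q unfolding reads_def by auto
  then have "w ! (pos v - 1) = v" using pos_inj v \<open>1 \<le> pos v\<close> by simp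
  then show "v \<in> set w" using q by (metis nth_mem)
qed

lemma nth_reads:
  assumes "reads w" "v \<in> E" "pos v \<le> length w"
  shows "w ! (pos v - 1) = v"
proof -
  have "1 \<le> pos v" using pos_range assms(2) by blast
  then have "pos (w ! (pos v - 1)) = Suc (pos v - 1)" "w ! (pos v - 1) \<in> E"
    using assms unfolding reads_def by auto
  then show ?thesis using pos_inj assms(2) \<open>1 \<le> pos v\<close> by simp
qed

text \<open>Kept arcs do not nest, so the elements waiting for their successor are served in the order
  in which they were read.\<close>
lemma hd_pending_reads:
  assumes w: "reads w" and e: "e \<in> E" "pos e = Suc (length w)" and ue: "(u, e) \<in> K"
  shows "hd (pending A n k w) = u"
proof -
  let ?P = "\<lambda>v. chain_next A n k v \<noteq> None \<and> the (chain_next A n k v) \<notin> set w"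
  have uE: "u \<in> E" using arc_elems kept_arc ue by blast
  have pu: "1 \<le> pos u" "pos u \<le> length w"
    using pos_range uE arc_pos_less[OF kept_arc[OF ue]] e by auto
  have wu: "w ! (pos u - 1) = u" using nth_reads[OF w uE pu(2)] .
  have Pu: "?P u" using chain_next_kept[OF uE ue] set_reads[OF w] e by simp
  have "\<not> ?P (w ! j)" if j: "j < pos u - 1" for j
  proof
    assume Pv: "?P (w ! j)"
    let ?v = "w ! j"
    have v: "?v \<in> E" "pos ?v = Suc j" using w j pu unfolding reads_def by auto
    obtain w' where vw': "(?v, w') \<in> K" using kept_of_chain_next[OF v(1)] Pv by blast
    have w'E: "w' \<in> E" using arc_elems kept_arc vw' by blast
    have "w' \<notin> set w" using Pv chain_next_kept[OF v(1) vw'] by simp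
    then have "pos w' > length w" using set_reads[OF w] w'E by auto
    moreover have "w' \<noteq> e"
    proof
      assume "w' = e"
      then have "?v = u" using kept_in_unique vw' ue by blast
      then show False using v j by simp
    qed
    then have "pos w' \<noteq> pos e" using pos_inj w'E e by blast
    ultimately have "pos e \<le> pos w'" using e by simp
    moreover have "pos ?v \<le> pos u" using v j by simp
    ultimately show False using vw' kept_arc[OF ue] \<open>w' \<noteq> e\<close> unfolding kept_iff by blast
  qed
  then have "hd (filter ?P w) = w ! (pos u - 1)"
    using hd_filter_eq_nth[of "pos u - 1" w ?P] pu Pu wu by simp
  then show ?thesis unfolding pending_def using wu by simp
qed

lemma next_elem_reads:
  assumes w: "reads w" and p: "length w < n * k"
  shows "reads (w @ [next_elem A n k w (Suc (length w))])"
proof -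
  obtain e where e: "e \<in> E" "pos e = Suc (length w)" using pos_surj[of "Suc (length w)"] p by auto
  have "next_elem A n k w (Suc (length w)) = e"
  proof (cases "is_start A n (Suc (length w))")
    case True
    then show ?thesis unfolding next_elem_def using start_elem[OF True] e pos_inj by auto
  next
    case False
    then have "\<not> is_start A n (pos e)" using e(2) by simp
    then obtain u where ue: "(u, e) \<in> K" using nonstart_has_pred[OF e(1)] by blast
    have "u \<in> E" using arc_elems kept_arc ue by blast
    then show ?thesis
      unfolding next_elem_def using False hd_pending_reads[OF w e ue] chain_next_kept ue by simp
  qed
  then show ?thesis using w e unfolding reads_def by (auto simp: nth_append less_Suc_eq)
qed

lemma reads_rebuild: "p \<le> n * k \<Longrightarrow> reads (rebuild A n k p)"
proof (induction p)
  case 0 then show ?case by (simp add: reads_def)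
next
  case (Suc p)
  then show ?case using next_elem_reads[of "rebuild A n k p"] by (simp add: length_rebuild)
qed

lemma rebuild_nth_pos: "e \<in> E \<Longrightarrow> rebuild A n k (n * k) ! (pos e - 1) = e"
  using nth_reads[OF reads_rebuild] pos_range by (simp add: length_rebuild)

lemma kept_within_arc:
  assumes "(p, q) \<in> Arc"
  shows "\<exists>p' q'. (p', q') \<in> K \<and> pos p \<le> pos p' \<and> pos q' \<le> pos q"
proof -
  let ?In = "\<lambda>(p', q'). (p', q') \<in> Arc \<and> pos p \<le> pos p' \<and> pos q' \<le> pos q"
  let ?span = "\<lambda>(p', q'). pos q' - pos p'"
  obtain p' q' where In: "?In (p', q')" and least: "\<And>a. ?In a \<Longrightarrow> ?span (p', q') \<le> ?span a"
    using ex_has_least_nat[of ?In "(p, q)" ?span] assms by force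
  have "(p', q') \<in> K"
    unfolding kept_iff
  proof (intro conjI notI)
    show "(p', q') \<in> Arc" using In by simp
  next
    assume "\<exists>p'' q''. (p'', q'') \<in> Arc \<and> (p'', q'') \<noteq> (p', q') \<and> pos p' \<le> pos p'' \<and> pos q'' \<le> pos q'"
    then obtain p'' q'' where b: "(p'', q'') \<in> Arc" "(p'', q'') \<noteq> (p', q')"
      "pos p' \<le> pos p''" "pos q'' \<le> pos q'"
      by blast
    have "?In (p'', q'')" using b In by auto
    then have "pos q' - pos p' \<le> pos q'' - pos p''" using least[of "(p'', q'')"] by simp
    moreover have "pos p' < pos q'" "pos p'' < pos q''" using arc_pos_less In b(1) by auto
    ultimately have "pos p' = pos p''" "pos q' = pos q''" using b by linarith+
    then show False using pos_inj b(2) arc_elems[OF b(1)] arc_elems In by fastforce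
  qed
  then show ?thesis using In by blast
qed

lemma long_diff_iff:
  assumes ij: "1 \<le> i" "i < j" "j \<le> n"
  shows "x i - x j > real k \<longleftrightarrow>
    (\<exists>e\<in>E. \<exists>w. chain_next A n k e = Some w \<and> pos (i, 0) \<le> pos e \<and> pos w \<le> pos (j, k - 1))"
proof
  assume "x i - x j > real k"
  then have "((i, 0), (j, k - 1)) \<in> Arc" unfolding dg_arcs_iff using ij by auto
  then obtain e w where "(e, w) \<in> K" "pos (i, 0) \<le> pos e" "pos w \<le> pos (j, k - 1)"
    using kept_within_arc by blast
  moreover have "e \<in> E" using arc_elems kept_arc calculation(1) by blast
  ultimately show "\<exists>e\<in>E. \<exists>w. chain_next A n k e = Some w \<and> pos (i, 0) \<le> pos e \<and> pos w \<le> pos (j, k - 1)"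
    using chain_next_kept by blast
next
  assume "\<exists>e\<in>E. \<exists>w. chain_next A n k e = Some w \<and> pos (i, 0) \<le> pos e \<and> pos w \<le> pos (j, k - 1)"
  then obtain e w where ew: "e \<in> E" "chain_next A n k e = Some w" "pos (i, 0) \<le> pos e" "pos w \<le> pos (j, k - 1)"
    by blast
  obtain w' where ew': "(e, w') \<in> K" using kept_of_chain_next[OF ew(1)] ew(2) by auto
  then have a: "(e, w) \<in> Arc" using chain_next_kept[OF ew(1)] ew(2) kept_arc by simp
  have E2: "w \<in> E" "(i, 0) \<in> E" "(j, k - 1) \<in> E" using arc_elems a ij k1 by (auto simp: mem_dg_elems)
  have "val e \<le> val (i, 0)" using pos_le_iff ew(1,3) E2 by blast
  moreover have "val (j, k - 1) \<le> val w" using pos_le_iff ew(4) E2 by blast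
  moreover have "val e - val w \<ge> 1" using arc_val_gap a .
  ultimately have "x i - x j \<ge> real k" using k1 unfolding dg_val_def by (simp add: of_nat_diff)
  moreover have "x i - x j \<noteq> of_int (int k)" using diff_neq_int[of i j "int k"] ij k1 by simp
  ultimately show "x i - x j > real k" by simp
qed

lemma short_diff_iff:
  assumes ij: "1 \<le> i" "i \<le> n" "1 \<le> j" "j \<le> n" and l: "- int k + 1 \<le> l" "l \<le> int k - 1"
  shows "x i - x j > of_int l \<longleftrightarrow>
    (if 0 \<le> l then pos (i, 0) < pos (j, nat l) else pos (i, nat (- l)) < pos (j, 0))"
proof (cases "0 \<le> l")
  case True
  have E2: "(i, 0) \<in> E" "(j, nat l) \<in> E" using ij l True k1 by (auto simp: mem_dg_elems)
  have "pos (i, 0) < pos (j, nat l) \<longleftrightarrow> x i > x j + real (nat l)"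
    using pos_less_iff[OF E2] unfolding dg_val_def by simp
  also have "\<dots> \<longleftrightarrow> x i - x j > of_int l" using True by auto
  finally show ?thesis using True by simp
next
  case False
  have E2: "(i, nat (- l)) \<in> E" "(j, 0) \<in> E" using ij l False k1 by (auto simp: mem_dg_elems)
  have "pos (i, nat (- l)) < pos (j, 0) \<longleftrightarrow> x i + real (nat (- l)) > x j"
    using pos_less_iff[OF E2] unfolding dg_val_def by simp
  also have "\<dots> \<longleftrightarrow> x i - x j > of_int l" using False by auto
  finally show ?thesis using False by simp
qed

end

lemma pos_eq_if_sigma_eq:
  assumes "shi_point n k x" "shi_point n k y" and eq: "sigma_pt n k x = sigma_pt n k y"
    and e: "e \<in> dg_elems n k"
  shows "dg_pos n k x e = dg_pos n k y e"
proof -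
  interpret X: shi_point n k x by fact
  interpret Y: shi_point n k y by fact
  have "X.A = Y.A" unfolding X.A_def Y.A_def eq ..
  moreover have "X.pos e - 1 < n * k" "Suc (X.pos e - 1) = X.pos e" using X.pos_range[OF e] by auto
  then have "Y.pos (rebuild Y.A n k (n * k) ! (X.pos e - 1)) = X.pos e"
    using Y.reads_rebuild[of "n * k"] unfolding Y.reads_def by (metis length_rebuild order_refl)
  ultimately show ?thesis using X.rebuild_nth_pos[OF e] by simp
qed

lemma shi_equiv_if_sigma_eq:
  assumes k1: "1 \<le> k" and x: "x \<in> shi_complement n k" and y: "y \<in> shi_complement n k"
    and eq: "sigma_pt n k x = sigma_pt n k y"
  shows "shi_equiv n k x y"
  unfolding shi_equiv_def
proof (intro allI impI)
  interpret X: shi_point n k x using k1 x by unfold_locales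
  interpret Y: shi_point n k y using k1 y by unfold_locales
  have AA: "X.A = Y.A" unfolding X.A_def Y.A_def eq ..
  have pe: "dg_pos n k x e = dg_pos n k y e" if "e \<in> dg_elems n k" for e
    using pos_eq_if_sigma_eq[OF X.shi_point_axioms Y.shi_point_axioms eq that] .
  fix i j l assume h: "1 \<le> i \<and> i < j \<and> j \<le> n \<and> - int k + 1 \<le> l \<and> l \<le> int k"
  show "x i - x j > of_int l \<longleftrightarrow> y i - y j > of_int l"
  proof (cases "l = int k")
    case True
    have ij: "(i, 0) \<in> dg_elems n k" "(j, k - 1) \<in> dg_elems n k" using h k1 by (auto simp: mem_dg_elems)
    have span: "(X.pos (i, 0) \<le> X.pos e \<and> X.pos w \<le> X.pos (j, k - 1)) \<longleftrightarrow>
                (Y.pos (i, 0) \<le> Y.pos e \<and> Y.pos w \<le> Y.pos (j, k - 1))"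
      if "e \<in> dg_elems n k" "chain_next X.A n k e = Some w" for e w
      using pe that(1) chain_next_elems[OF k1 that] ij by simp
    have "x i - x j > real k \<longleftrightarrow> (\<exists>e\<in>dg_elems n k. \<exists>w. chain_next X.A n k e = Some w \<and>
        X.pos (i, 0) \<le> X.pos e \<and> X.pos w \<le> X.pos (j, k - 1))"
      using X.long_diff_iff h by simp
    also have "\<dots> \<longleftrightarrow> (\<exists>e\<in>dg_elems n k. \<exists>w. chain_next Y.A n k e = Some w \<and>
        Y.pos (i, 0) \<le> Y.pos e \<and> Y.pos w \<le> Y.pos (j, k - 1))"
      using span unfolding AA by blast
    also have "\<dots> \<longleftrightarrow> y i - y j > real k" using Y.long_diff_iff h by simp
    finally show ?thesis using True by simp
  next
    case False
    then have l: "l \<le> int k - 1" using h by simp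
    have "(i, 0) \<in> dg_elems n k" "(j, 0) \<in> dg_elems n k" "0 \<le> l \<Longrightarrow> (j, nat l) \<in> dg_elems n k"
      "\<not> 0 \<le> l \<Longrightarrow> (i, nat (- l)) \<in> dg_elems n k"
      using h l k1 by (auto simp: mem_dg_elems)
    then show ?thesis using X.short_diff_iff[of i j l] Y.short_diff_iff[of i j l] h l pe by simp
  qed
qed

lemma dg_val_less_iff_if_shi_equiv:
  assumes "shi_point n k x" "shi_point n k y" and xy: "shi_equiv n k x y"
    and "p \<in> dg_elems n k" "q \<in> dg_elems n k"
  shows "dg_val x p < dg_val x q \<longleftrightarrow> dg_val y p < dg_val y q"
proof -
  interpret X: shi_point n k x by fact
  interpret Y: shi_point n k y by fact
  obtain i m j m' where pq: "p = (i, m)" "q = (j, m')" by fastforce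
  have h: "1 \<le> i" "i \<le> n" "m < k" "1 \<le> j" "j \<le> n" "m' < k"
    using assms(4,5) pq by (auto simp: mem_dg_elems)
  consider "i = j" | "i < j" | "j < i" by linarith
  then show ?thesis
  proof cases
    case 1 then show ?thesis using pq by (simp add: dg_val_def)
  next
    case 2
    let ?l = "int m' - int m"
    have "x i - x j > of_int ?l \<longleftrightarrow> y i - y j > of_int ?l"
      using xy[unfolded shi_equiv_def, rule_format, of i j ?l] 2 h by simp
    moreover have "x i - x j \<noteq> of_int ?l" "y i - y j \<noteq> of_int ?l"
      using X.diff_neq_int[of i j ?l] Y.diff_neq_int[of i j ?l] 2 h by auto
    ultimately show ?thesis using pq unfolding dg_val_def by auto
  next
    case 3
    let ?l = "int m - int m'"
    have "x j - x i > of_int ?l \<longleftrightarrow> y j - y i > of_int ?l"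
      using xy[unfolded shi_equiv_def, rule_format, of j i ?l] 3 h by simp
    then show ?thesis using pq unfolding dg_val_def by auto
  qed
qed

lemma dg_kept_arcs_cong:
  assumes "shi_point n k x" "shi_point n k y" and arcs: "dg_arcs n k x = dg_arcs n k y"
    and pos: "\<And>e. e \<in> dg_elems n k \<Longrightarrow> dg_pos n k x e = dg_pos n k y e"
  shows "dg_kept_arcs n k x = dg_kept_arcs n k y"
proof -
  interpret X: shi_point n k x by fact
  interpret Y: shi_point n k y by fact
  have nest: "(X.pos p \<le> X.pos p' \<and> X.pos q' \<le> X.pos q) \<longleftrightarrow> (Y.pos p \<le> Y.pos p' \<and> Y.pos q' \<le> Y.pos q)"
    if "(p, q) \<in> X.Arc" "(p', q') \<in> X.Arc" for p q p' q'
  proof -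
    have "p \<in> X.E" "q \<in> X.E" "p' \<in> X.E" "q' \<in> X.E" using X.arc_elems that by auto
    then show ?thesis using pos by simp
  qed
  have "(p, q) \<in> X.K \<longleftrightarrow> (p, q) \<in> Y.K" for p q
  proof -
    have "(p, q) \<in> X.K \<longleftrightarrow> (p, q) \<in> X.Arc \<and>
        \<not> (\<exists>p' q'. (p', q') \<in> X.Arc \<and> (p', q') \<noteq> (p, q) \<and> X.pos p \<le> X.pos p' \<and> X.pos q' \<le> X.pos q)"
      by (rule X.kept_iff)
    also have "\<dots> \<longleftrightarrow> (p, q) \<in> Y.Arc \<and>
        \<not> (\<exists>p' q'. (p', q') \<in> Y.Arc \<and> (p', q') \<noteq> (p, q) \<and> Y.pos p \<le> Y.pos p' \<and> Y.pos q' \<le> Y.pos q)"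
      using nest arcs by blast
    also have "\<dots> \<longleftrightarrow> (p, q) \<in> Y.K" by (rule Y.kept_iff[symmetric])
    finally show ?thesis .
  qed
  then show ?thesis by auto
qed

lemma sigma_eq_if_shi_equiv:
  assumes k1: "1 \<le> k" and x: "x \<in> shi_complement n k" and y: "y \<in> shi_complement n k"
    and xy: "shi_equiv n k x y"
  shows "sigma_pt n k x = sigma_pt n k y"
proof -
  interpret X: shi_point n k x using k1 x by unfold_locales
  interpret Y: shi_point n k y using k1 y by unfold_locales
  have pe: "dg_pos n k x p = dg_pos n k y p" if "p \<in> dg_elems n k" for p
  proof -
    have "{q \<in> dg_elems n k. dg_val x q > dg_val x p} = {q \<in> dg_elems n k. dg_val y q > dg_val y p}"
      using dg_val_less_iff_if_shi_equiv[OF X.shi_point_axioms Y.shi_point_axioms xy that] by blast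
    then show ?thesis unfolding dg_pos_def by simp
  qed
  have "x i - x j > real k \<longleftrightarrow> y i - y j > real k" if "1 \<le> i" "i < j" "j \<le> n" for i j
    using xy[unfolded shi_equiv_def, rule_format, of i j "int k"] k1 that by simp
  then have "dg_arcs n k x = dg_arcs n k y" unfolding dg_arcs_def by blast
  then have "dg_kept_arcs n k x = dg_kept_arcs n k y"
    using dg_kept_arcs_cong[OF X.shi_point_axioms Y.shi_point_axioms] pe by blast
  then have "dg_chain n k x = dg_chain n k y" unfolding dg_chain_def by simp
  moreover have "dg_pos n k x ` dg_chain n k x (i, 0) = dg_pos n k y ` dg_chain n k x (i, 0)"
    if "1 \<le> i" "i \<le> n" for i
    using pe X.chain_elems[OF X.first_copy_elem[OF that]] by (intro image_cong) auto
  ultimately show ?thesis unfolding sigma_pt_def by (intro map_cong) auto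
qed

section \<open>The labels of a point form a k-parking function\<close>

context shi_point
begin

lemma card_pos_less:
  assumes "v \<le> Suc (n * k)"
  shows "card {e \<in> E. pos e < v} = v - 1"
proof -
  have "inj_on pos E" using bij_betw_pos by (simp add: bij_betw_def)
  then have inj: "inj_on pos {e \<in> E. pos e < v}" by (rule inj_on_subset) blast
  have "pos ` {e \<in> E. pos e < v} = {1..<v}"
  proof
    show "pos ` {e \<in> E. pos e < v} \<subseteq> {1..<v}"
    proof
      fix q assume "q \<in> pos ` {e \<in> E. pos e < v}"
      then obtain e where "e \<in> E" "pos e < v" "q = pos e" by blast
      then show "q \<in> {1..<v}" using pos_range[of e] by simp
    qed
    show "{1..<v} \<subseteq> pos ` {e \<in> E. pos e < v}"
    proof
      fix q assume q: "q \<in> {1..<v}"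
      then obtain e where "e \<in> E" "pos e = q" using pos_surj[of q] assms by auto
      with q show "q \<in> pos ` {e \<in> E. pos e < v}" by (intro rev_image_eqI[of e]) auto
    qed
  qed
  then show ?thesis using card_image[OF inj] by simp
qed

lemma pos_le_card_labels:
  assumes "v \<le> Suc (n * k)"
  shows "v - 1 \<le> k * card {j. 1 \<le> j \<and> j \<le> n \<and> A j < v}"
proof -
  let ?J = "{j. 1 \<le> j \<and> j \<le> n \<and> A j < v}"
  have "{e \<in> E. pos e < v} \<subseteq> ?J \<times> {..<k}"
  proof
    fix e assume e: "e \<in> {e \<in> E. pos e < v}"
    obtain j m where jm: "e = (j, m)" by fastforce
    have h: "1 \<le> j" "j \<le> n" "m < k" using e jm mem_dg_elems by auto
    have "A j \<le> pos e" using A_le_pos_chain[OF h(1,2)] copies_in_chain[OF h] jm by simp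
    then show "e \<in> ?J \<times> {..<k}" using e jm h by auto
  qed
  then have "card {e \<in> E. pos e < v} \<le> card (?J \<times> {..<k})" by (intro card_mono) auto
  then show ?thesis using card_pos_less[OF assms] by (simp add: card_cartesian_product mult.commute)
qed

lemma sigma_pt_eq_map: "sigma_pt n k x = map A [1..<n+1]"
  unfolding sigma_pt_def using A_eq by (intro map_cong) auto

lemma sigma_pt_k_parking: "k_parking n k (sigma_pt n k x)"
proof -
  let ?a = "sigma_pt n k x"
  have len: "length ?a = n" unfolding sigma_pt_def by simp
  have pos_A: "\<exists>e\<in>E. v = pos e" if "v \<in> set ?a" for v
  proof -
    have "v \<in> A ` {1..n}" using that unfolding sigma_pt_eq_map by auto
    then obtain i where i: "1 \<le> i" "i \<le> n" "v = A i" by auto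
    obtain e where "e \<in> chain_of (i, 0)" "A i = pos e" using A_in_pos_chain[OF i(1,2)] by auto
    then show ?thesis using chain_elems[OF first_copy_elem[OF i(1,2)]] i(3) by blast
  qed
  have "sort ?a ! c \<le> 1 + k * c" if c: "c < n" for c
  proof -
    let ?v = "sort ?a ! c"
    have "?v \<in> set ?a" using c len by (metis length_sort nth_mem set_sort)
    then have "?v \<le> Suc (n * k)" using pos_A pos_range by fastforce
    then have "?v - 1 \<le> k * card {j. 1 \<le> j \<and> j \<le> n \<and> A j < ?v}" by (rule pos_le_card_labels)
    also have "card {j. 1 \<le> j \<and> j \<le> n \<and> A j < ?v} = length (filter (\<lambda>u. u < ?v) ?a)"
      using card_entry_set[OF len] unfolding A_def .
    also have "\<dots> \<le> c" using length_filter_less_sort_nth c len by simp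
    finally show ?thesis by simp
  qed
  moreover have "\<forall>v\<in>set ?a. 1 \<le> v" using pos_A pos_range by fastforce
  ultimately show ?thesis unfolding k_parking_def using len by simp
qed

end

lemma shi_sigma_cell:
  assumes k1: "1 \<le> k" and x: "x \<in> shi_complement n k"
  shows "shi_sigma n k {y \<in> shi_complement n k. shi_equiv n k x y} = sigma_pt n k x"
proof -
  let ?cell = "{y \<in> shi_complement n k. shi_equiv n k x y}"
  have "x \<in> ?cell" using x shi_equiv_refl by simp
  then have "(SOME y. y \<in> ?cell) \<in> ?cell" by (rule someI[where P = "\<lambda>y. y \<in> ?cell"])
  then have "sigma_pt n k x = sigma_pt n k (SOME y. y \<in> ?cell)"
    using sigma_eq_if_shi_equiv[OF k1 x] by blast
  then show ?thesis unfolding shi_sigma_def by simp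
qed

locale chain_labels =
  fixes n k :: nat and A :: "nat \<Rightarrow> nat"
  assumes k1: "1 \<le> k"
begin

abbreviation "E \<equiv> dg_elems n k"
abbreviation "succ \<equiv> chain_next A n k"
abbreviation "start \<equiv> is_start A n"
abbreviation "first_of \<equiv> first_index A n"

definition succ_rel :: "((nat \<times> nat) \<times> (nat \<times> nat)) set" where
  "succ_rel = {(e, w). e \<in> E \<and> succ e = Some w}"

lemma succ_rel_iff: "(u, v) \<in> succ_rel \<longleftrightarrow> u \<in> E \<and> succ u = Some v"
  unfolding succ_rel_def by simp

lemma first_of_props:
  assumes "start p"
  shows "1 \<le> first_of p \<and> first_of p \<le> n \<and> A (first_of p) = p \<and>
    (\<forall>j. 1 \<le> j \<and> j \<le> n \<and> A j = p \<longrightarrow> first_of p \<le> j)"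
proof -
  have ex: "\<exists>i. 1 \<le> i \<and> i \<le> n \<and> A i = p" using assms unfolding is_start_def .
  show ?thesis
    unfolding first_index_def using LeastI_ex[OF ex] Least_le[of "\<lambda>i. 1 \<le> i \<and> i \<le> n \<and> A i = p"]
    by blast
qed

lemma start_A: "1 \<le> j \<Longrightarrow> j \<le> n \<Longrightarrow> start (A j)"
  unfolding is_start_def by blast

lemma succ_cases:
  assumes "succ (i, m) = Some w"
  shows "(0 < m \<and> w = (i, m - 1)) \<or>
    (m = 0 \<and> (\<exists>j. w = (j, k - 1) \<and> i < j \<and> j \<le> n \<and> A j = A i \<and> (\<forall>t. i < t \<and> t < j \<longrightarrow> A t \<noteq> A i)))"
proof (cases "0 < m")
  case True then show ?thesis using assms unfolding chain_next_def by simp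
next
  case False
  let ?j = "LEAST j. i < j \<and> j \<le> n \<and> A j = A i"
  have ex: "\<exists>j. i < j \<and> j \<le> n \<and> A j = A i" and w: "w = (?j, k - 1)"
    using assms False unfolding chain_next_def by (auto split: if_splits)
  have "i < ?j \<and> ?j \<le> n \<and> A ?j = A i" using LeastI_ex[OF ex] .
  moreover have "A t \<noteq> A i" if "i < t" "t < ?j" for t
    using that calculation not_less_Least[of t "\<lambda>j. i < j \<and> j \<le> n \<and> A j = A i"] by auto
  ultimately show ?thesis using False w by blast
qed

lemma succ_elems: "e \<in> E \<Longrightarrow> succ e = Some w \<Longrightarrow> w \<in> E"
  using chain_next_elems k1 by blast

lemma succ_A: "succ e = Some w \<Longrightarrow> A (fst w) = A (fst e)"
  using succ_cases[of "fst e" "snd e" w] by auto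

lemma succ_fst_le: "succ e = Some w \<Longrightarrow> fst e \<le> fst w"
  using succ_cases[of "fst e" "snd e" w] by auto

lemma succ_inj:
  assumes e: "e \<in> E" "e' \<in> E" and s: "succ e = Some w" "succ e' = Some w"
  shows "e = e'"
proof -
  obtain i m i' m' where im: "e = (i, m)" "e' = (i', m')" by fastforce
  have mk: "m < k" "m' < k" using e im mem_dg_elems by auto
  note c = succ_cases[of i m w] succ_cases[of i' m' w]
  consider "0 < m" "0 < m'" | "0 < m" "m' = 0" | "m = 0" "0 < m'" | "m = 0" "m' = 0" by auto
  then show ?thesis
  proof cases
    case 4
    then obtain j where "i < j" "A j = A i" "\<forall>t. i < t \<and> t < j \<longrightarrow> A t \<noteq> A i"
      and "i' < j" "A j = A i'" "\<forall>t. i' < t \<and> t < j \<longrightarrow> A t \<noteq> A i'"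
      using c s im by auto
    then have "i = i'" by (metis linorder_neqE_nat)
    then show ?thesis using im 4 by simp
  qed (use c s im mk in auto)
qed

lemma succ_not_first:
  assumes e: "e \<in> E" and s: "succ e = Some w" and p: "start p"
  shows "w \<noteq> (first_of p, k - 1)"
proof
  assume w: "w = (first_of p, k - 1)"
  obtain i m where im: "e = (i, m)" by fastforce
  have h: "1 \<le> i" "i \<le> n" "m < k" using e im mem_dg_elems by auto
  have fp: "A (first_of p) = p" "\<And>j. 1 \<le> j \<Longrightarrow> j \<le> n \<Longrightarrow> A j = p \<Longrightarrow> first_of p \<le> j"
    using first_of_props[OF p] by auto
  have "succ (i, m) = Some w" using s im by simp
  from succ_cases[OF this] show False
  proof (elim disjE conjE exE)
    assume "w = (i, m - 1)" "0 < m"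
    then have "m - 1 = k - 1" using w by simp
    then show False using \<open>0 < m\<close> h(3) by arith
  next
    fix j assume "w = (j, k - 1)" "i < j" "A j = A i"
    then show False using w fp(1) fp(2)[OF h(1,2)] by simp
  qed
qed

lemma succ_rtrancl_elems:
  "(e, w) \<in> succ_rel\<^sup>* \<Longrightarrow> e \<in> E \<Longrightarrow> w \<in> E \<and> A (fst w) = A (fst e)"
proof (induction rule: rtrancl_induct)
  case (step y z)
  then have "y \<in> E" "succ y = Some z" unfolding succ_rel_def by auto
  then show ?case using succ_elems[of y z] succ_A[of y z] step by simp
qed simp

lemma copies_succ_rtrancl:
  assumes "1 \<le> j" "j \<le> n" "m < k"
  shows "((j, k - 1), (j, m)) \<in> succ_rel\<^sup>*"
  using assms(3)
proof (induction "k - 1 - m" arbitrary: m)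
  case 0
  then have "m = k - 1" by simp
  then show ?case by simp
next
  case (Suc d)
  then have m: "Suc m < k" "d = k - 1 - Suc m" by auto
  then have "((j, k - 1), (j, Suc m)) \<in> succ_rel\<^sup>*" using Suc.hyps(1) by blast
  moreover have "((j, Suc m), (j, m)) \<in> succ_rel"
    unfolding succ_rel_def using assms m by (simp add: mem_dg_elems chain_next_def)
  ultimately show ?case by (rule rtrancl_into_rtrancl)
qed

lemma succ_rel_prev_label:
  assumes j: "1 \<le> j'" "j' < j" "j \<le> n" "A j' = A j" and between: "\<forall>t. j' < t \<and> t < j \<longrightarrow> A t \<noteq> A j"
  shows "((j', 0), (j, k - 1)) \<in> succ_rel"
proof -
  have "(LEAST t. j' < t \<and> t \<le> n \<and> A t = A j') = j"
    using j between by (intro Least_equality) (auto simp: not_less[symmetric])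
  then have "succ (j', 0) = Some (j, k - 1)" unfolding chain_next_def using j by auto
  then show ?thesis unfolding succ_rel_def using j k1 by (simp add: mem_dg_elems)
qed

lemma start_reaches:
  assumes j: "1 \<le> j" "j \<le> n" and m: "m < k"
  shows "((first_of (A j), k - 1), (j, m)) \<in> succ_rel\<^sup>*"
proof -
  have "((first_of (A j), k - 1), (j, k - 1)) \<in> succ_rel\<^sup>*" using j
  proof (induction j rule: less_induct)
    case (less j)
    let ?c = "A j"
    have fj: "1 \<le> first_of ?c" "A (first_of ?c) = ?c" "first_of ?c \<le> j"
      using first_of_props[OF start_A[OF less.prems]] less.prems by auto
    show ?case
    proof (cases "first_of ?c = j")
      case True then show ?thesis by simp
    next
      case False
      let ?S = "{t. 1 \<le> t \<and> t < j \<and> A t = ?c}"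
      have fin: "finite ?S" by simp
      have "first_of ?c \<in> ?S" using fj False by simp
      then have j': "Max ?S \<in> ?S" "\<forall>t \<in> ?S. t \<le> Max ?S" using Max_in[OF fin] Max_ge[OF fin] by blast+
      have M: "1 \<le> Max ?S" "Max ?S < j" "A (Max ?S) = A j" using j'(1) by auto
      have between: "\<forall>t. Max ?S < t \<and> t < j \<longrightarrow> A t \<noteq> A j"
      proof (intro allI impI notI)
        fix t assume t: "Max ?S < t \<and> t < j" and "A t = A j"
        then have "t \<in> ?S" using M(1) by simp
        then have "t \<le> Max ?S" using j'(2) by blast
        with t show False by simp
      qed
      have "((first_of ?c, k - 1), (Max ?S, k - 1)) \<in> succ_rel\<^sup>*"
        using less.IH[of "Max ?S"] M less.prems by simp
      moreover have "((Max ?S, k - 1), (Max ?S, 0)) \<in> succ_rel\<^sup>*"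
        using copies_succ_rtrancl[of "Max ?S" 0] M less.prems k1 by simp
      moreover have "((Max ?S, 0), (j, k - 1)) \<in> succ_rel"
        using succ_rel_prev_label[OF M(1,2) less.prems(2) M(3) between] .
      ultimately show ?thesis by (meson rtrancl_into_rtrancl rtrancl_trans)
    qed
  qed
  then show ?thesis using copies_succ_rtrancl[OF j m] by (rule rtrancl_trans)
qed

end

section \<open>The reading of a k-parking function\<close>

locale parking_witness = chain_labels n k "entry a" for n k :: nat and a :: "nat list" +
  assumes n1: "1 \<le> n" and park: "k_parking n k a"
begin

abbreviation "A \<equiv> entry a"
abbreviation "N \<equiv> n * k"

lemma length_a: "length a = n"
  using park unfolding k_parking_def by simp

lemma A_in_set: "1 \<le> j \<Longrightarrow> j \<le> n \<Longrightarrow> A j \<in> set a"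
  unfolding entry_def using length_a by simp

lemma A_ge_1: "1 \<le> j \<Longrightarrow> j \<le> n \<Longrightarrow> 1 \<le> A j"
  using A_in_set park unfolding k_parking_def by blast

lemma A_le_N:
  assumes j: "1 \<le> j" "j \<le> n"
  shows "A j \<le> N"
proof -
  have "A j \<in> set (sort a)" using A_in_set[OF j] by simp
  then obtain t where t: "t < length (sort a)" "A j = sort a ! t" by (metis in_set_conv_nth)
  have tn: "t \<le> n - 1" "n - 1 < length (sort a)" using t length_a n1 by auto
  have "A j \<le> sort a ! (n - 1)" using t tn sorted_nth_mono[of "sort a" t "n - 1"] by simp
  also have "\<dots> \<le> 1 + k * (n - 1)" using park n1 unfolding k_parking_def by simp
  also have "\<dots> \<le> N" using n1 k1 by (cases n) (auto simp: algebra_simps)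
  finally show ?thesis .
qed


lemma hd_pending:
  assumes "pending A n k w \<noteq> []"
  shows "hd (pending A n k w) \<in> set w \<and> succ (hd (pending A n k w)) \<noteq> None \<and>
    the (succ (hd (pending A n k w))) \<notin> set w"
proof -
  have "hd (pending A n k w) \<in> set (pending A n k w)" using assms by (rule hd_in_set)
  then show ?thesis unfolding pending_def by simp
qed

lemma pending_Nil_closed:
  assumes "pending A n k w = []" "u \<in> set w" "succ u = Some z"
  shows "z \<in> set w"
proof -
  have "\<not> (succ u \<noteq> None \<and> the (succ u) \<notin> set w)"
    using assms(1,2) unfolding pending_def filter_empty_conv by blast
  then show ?thesis using assms(3) by simp
qed

lemma start_in_rebuild:
  assumes "1 \<le> c" "c \<le> p" "start c"
  shows "(first_of c, k - 1) \<in> set (rebuild A n k p)"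
proof -
  have "rebuild A n k p ! (c - 1) = (first_of c, k - 1)"
    using nth_rebuild[of "c - 1" p] assms unfolding next_elem_def by simp
  moreover have "c - 1 < length (rebuild A n k p)" using assms by (simp add: length_rebuild)
  ultimately show ?thesis by (metis nth_mem)
qed

text \<open>This is where the parking inequalities are used: below a position that starts no chain,
  fewer than \<open>p/k\<close> labels can be at most \<open>p\<close>.\<close>
lemma parking_count:
  assumes p: "p < N" and ns: "\<not> start (Suc p)"
  shows "p < k * card {j. 1 \<le> j \<and> j \<le> n \<and> A j \<le> p}"
proof -
  let ?J = "{j. 1 \<le> j \<and> j \<le> n \<and> A j \<le> p}"
  have "{j. 1 \<le> j \<and> j \<le> n \<and> A j \<le> Suc p} = ?J"
    using ns unfolding is_start_def by (auto simp: le_Suc_eq)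
  then have cardJ: "card ?J = length (filter (\<lambda>v. v \<le> Suc p) a)"
    using card_entry_set[OF length_a, of "\<lambda>v. v \<le> Suc p"] by simp
  have "card ?J \<le> card {1..n}" by (intro card_mono) auto
  then consider "card ?J < n" | "card ?J = n" by fastforce
  then show ?thesis
  proof cases
    case 1
    have "\<not> sort a ! card ?J \<le> Suc p"
      using length_filter_le_sort_nth[of "card ?J" a "Suc p"] 1 length_a cardJ by auto
    moreover have "sort a ! card ?J \<le> 1 + k * card ?J" using park 1 unfolding k_parking_def by blast
    ultimately show ?thesis by simp
  next
    case 2
    then show ?thesis using p by (simp add: mult.commute)
  qed
qed

lemma pending_nonempty_step:
  assumes dist: "distinct (rebuild A n k p)" and p: "p < N" and ns: "\<not> start (Suc p)"
  shows "pending A n k (rebuild A n k p) \<noteq> []"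
proof
  let ?w = "rebuild A n k p"
  let ?J = "{j. 1 \<le> j \<and> j \<le> n \<and> A j \<le> p}"
  assume pe: "pending A n k ?w = []"
  have "?J \<times> {..<k} \<subseteq> set ?w"
  proof
    fix e assume "e \<in> ?J \<times> {..<k}"
    then obtain j m where jm: "e = (j, m)" "1 \<le> j" "j \<le> n" "A j \<le> p" "m < k" by auto
    have "(first_of (A j), k - 1) \<in> set ?w" using start_in_rebuild A_ge_1 jm start_A by simp
    with start_reaches[OF jm(2,3,5)] have "(j, m) \<in> set ?w"
      by (induction rule: rtrancl_induct) (auto simp: succ_rel_def intro: pending_Nil_closed[OF pe])
    then show "e \<in> set ?w" using jm by simp
  qed
  then have "card (?J \<times> {..<k}) \<le> card (set ?w)" by (intro card_mono) auto
  also have "\<dots> = p" using distinct_card[OF dist] by (simp add: length_rebuild)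
  finally show False using parking_count[OF p ns] by (simp add: card_cartesian_product mult.commute)
qed

lemma next_elem_fresh:
  assumes pend: "\<forall>q\<le>p. \<not> start (Suc q) \<longrightarrow> pending A n k (rebuild A n k q) \<noteq> []"
    and sub: "set (rebuild A n k p) \<subseteq> E"
  shows "next_elem A n k (rebuild A n k p) (Suc p) \<in> E \<and>
    next_elem A n k (rebuild A n k p) (Suc p) \<notin> set (rebuild A n k p)"
proof (cases "start (Suc p)")
  case True
  let ?e = "(first_of (Suc p), k - 1)"
  have fp: "1 \<le> first_of (Suc p)" "first_of (Suc p) \<le> n" "A (first_of (Suc p)) = Suc p"
    using first_of_props[OF True] by auto
  have "?e \<notin> set (rebuild A n k p)"
  proof
    assume "?e \<in> set (rebuild A n k p)"
    then obtain q where q: "q < p" "next_elem A n k (rebuild A n k q) (Suc q) = ?e"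
      by (metis in_set_conv_nth length_rebuild nth_rebuild)
    show False
    proof (cases "start (Suc q)")
      case True
      then have "A (first_of (Suc q)) = A (first_of (Suc p))" using q unfolding next_elem_def by simp
      then show False using first_of_props[OF True] fp q by simp
    next
      case False
      let ?u = "hd (pending A n k (rebuild A n k q))"
      have "pending A n k (rebuild A n k q) \<noteq> []" using pend q False by simp
      then have u: "?u \<in> set (rebuild A n k q)" "succ ?u \<noteq> None" using hd_pending by blast+
      moreover have "the (succ ?u) = ?e" using q False unfolding next_elem_def by simp
      ultimately have u: "?u \<in> set (rebuild A n k q)" "succ ?u = Some ?e" by auto
      have "?u \<in> E" using u(1) sub take_rebuild[of q p A n k] q by (metis less_imp_le set_take_subset subsetD)
      then show False using succ_not_first[OF _ u(2) True] by simp
    qed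
  qed
  then show ?thesis using True fp k1 unfolding next_elem_def by (simp add: mem_dg_elems)
next
  case False
  let ?u = "hd (pending A n k (rebuild A n k p))"
  have "pending A n k (rebuild A n k p) \<noteq> []" using pend False by simp
  then have u: "?u \<in> set (rebuild A n k p)" "succ ?u \<noteq> None" "the (succ ?u) \<notin> set (rebuild A n k p)"
    using hd_pending by auto
  then have "succ ?u = Some (the (succ ?u))" "?u \<in> E" using sub by auto
  then have "the (succ ?u) \<in> E" using succ_elems by blast
  then show ?thesis using u(3) False unfolding next_elem_def by simp
qed

lemma rebuild_invariant:
  "p \<le> N \<Longrightarrow> distinct (rebuild A n k p) \<and> set (rebuild A n k p) \<subseteq> E \<and>
    (\<forall>q<p. \<not> start (Suc q) \<longrightarrow> pending A n k (rebuild A n k q) \<noteq> [])"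
proof (induction p)
  case 0 then show ?case by simp
next
  case (Suc p)
  then have IH: "distinct (rebuild A n k p)" "set (rebuild A n k p) \<subseteq> E"
    "\<forall>q<p. \<not> start (Suc q) \<longrightarrow> pending A n k (rebuild A n k q) \<noteq> []"
    by auto
  have pend: "\<forall>q\<le>p. \<not> start (Suc q) \<longrightarrow> pending A n k (rebuild A n k q) \<noteq> []"
    using IH pending_nonempty_step[OF IH(1)] Suc.prems by (auto simp: le_less)
  then show ?case using IH next_elem_fresh[OF pend IH(2)] by (auto simp: less_Suc_eq_le)
qed

definition "word = rebuild A n k N"
definition "elem_at p = word ! (p - 1)"

lemma word_props: "distinct word" "set word = E" "length word = N"
proof -
  show d: "distinct word" using rebuild_invariant[of N] unfolding word_def by simp
  show l: "length word = N" unfolding word_def by (rule length_rebuild)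
  have s: "set word \<subseteq> E" using rebuild_invariant[of N] unfolding word_def by simp
  have "card (set word) = N" using distinct_card[OF d] l by simp
  then show "set word = E" using s card_dg_elems[of n k] finite_dg_elems by (intro card_subset_eq) auto
qed

lemma bij_betw_elem_at: "bij_betw elem_at {1..N} E"
proof -
  have inj: "inj_on elem_at {1..N}"
  proof (rule inj_onI)
    fix p q assume p: "p \<in> {1..N}" and q: "q \<in> {1..N}" and e: "elem_at p = elem_at q"
    have "word ! (p - 1) = word ! (q - 1)" using e unfolding elem_at_def .
    then have "p - 1 = q - 1" using word_props p q nth_eq_iff_index_eq by fastforce
    then show "p = q" using p q by auto
  qed
  have "elem_at ` {1..N} = set word"
  proof
    show "elem_at ` {1..N} \<subseteq> set word"
    proof
      fix v assume "v \<in> elem_at ` {1..N}"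
      then obtain p where p: "p \<in> {1..N}" "v = elem_at p" by blast
      have "p - 1 < length word" using p(1) word_props(3) by auto
      then have "word ! (p - 1) \<in> set word" by (rule nth_mem)
      then show "v \<in> set word" using p(2) unfolding elem_at_def by simp
    qed
    show "set word \<subseteq> elem_at ` {1..N}"
    proof
      fix v assume "v \<in> set word"
      then obtain i where i: "i < length word" "word ! i = v" by (metis in_set_conv_nth)
      then have "v = elem_at (Suc i)" unfolding elem_at_def by simp
      moreover have "Suc i \<in> {1..N}" using i(1) word_props(3) by simp
      ultimately show "v \<in> elem_at ` {1..N}" by blast
    qed
  qed
  then show ?thesis using inj word_props unfolding bij_betw_def by simp
qed

definition "position = the_inv_into {1..N} elem_at"

lemma position_elem_at: "1 \<le> p \<Longrightarrow> p \<le> N \<Longrightarrow> position (elem_at p) = p"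
  unfolding position_def using bij_betw_elem_at the_inv_into_f_f unfolding bij_betw_def by fastforce

lemma elem_at_position: assumes "e \<in> E" shows "elem_at (position e) = e" "1 \<le> position e" "position e \<le> N"
proof -
  show "elem_at (position e) = e" unfolding position_def using bij_betw_elem_at assms f_the_inv_into_f_bij_betw by fastforce
  have "position e \<in> {1..N}" unfolding position_def using bij_betw_the_inv_into[OF bij_betw_elem_at] assms
    unfolding bij_betw_def by blast
  then show "1 \<le> position e" "position e \<le> N" by auto
qed

lemma elem_at_elems: "1 \<le> p \<Longrightarrow> p \<le> N \<Longrightarrow> elem_at p \<in> E"
  using bij_betw_elem_at unfolding bij_betw_def by auto

lemma position_inj: "e \<in> E \<Longrightarrow> e' \<in> E \<Longrightarrow> position e = position e' \<Longrightarrow> e = e'"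
  using elem_at_position by metis

lemma set_rebuild: assumes q: "q \<le> N" shows "v \<in> set (rebuild A n k q) \<longleftrightarrow> v \<in> E \<and> position v \<le> q"
proof -
  have t: "rebuild A n k q = take q word" unfolding word_def using take_rebuild q by simp
  show ?thesis
  proof
    assume "v \<in> set (rebuild A n k q)"
    then obtain i where i: "i < q" "take q word ! i = v" using t word_props q by (metis in_set_conv_nth length_take min.absorb2)
    then have "v = elem_at (Suc i)" unfolding elem_at_def using q by simp
    moreover have "Suc i \<le> N" using i q by simp
    ultimately show "v \<in> E \<and> position v \<le> q" using position_elem_at elem_at_elems i by auto
  next
    assume v: "v \<in> E \<and> position v \<le> q"
    have pv: "1 \<le> position v" "word ! (position v - 1) = v" using elem_at_position[of v] v unfolding elem_at_def by auto
    have "position v - 1 < q" using pv(1) v by linarith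
    then have "take q word ! (position v - 1) = v" using pv(2) by simp
    moreover have "position v - 1 < length (take q word)" using v elem_at_position[of v] q word_props by auto
    ultimately show "v \<in> set (rebuild A n k q)" using t by (metis nth_mem)
  qed
qed

lemma elem_at_Suc: "q < N \<Longrightarrow> elem_at (Suc q) = next_elem A n k (rebuild A n k q) (Suc q)"
  unfolding elem_at_def word_def using nth_rebuild by simp

lemma elem_at_start: "1 \<le> p \<Longrightarrow> p \<le> N \<Longrightarrow> start p \<Longrightarrow> elem_at p = (first_of p, k - 1)"
  using elem_at_Suc[of "p - 1"] unfolding next_elem_def by simp

lemma pending_nonempty: assumes "1 \<le> p" "p \<le> N" "\<not> start p" shows "pending A n k (rebuild A n k (p - 1)) \<noteq> []"
proof -
  have a: "\<forall>q<N. \<not> start (Suc q) \<longrightarrow> pending A n k (rebuild A n k q) \<noteq> []" using rebuild_invariant[of N] by simp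
  have "p - 1 < N" "Suc (p - 1) = p" using assms by auto
  then show ?thesis using a assms(3) by metis
qed

definition "source p = position (hd (pending A n k (rebuild A n k (p - 1))))"

lemma source_props: assumes p: "1 \<le> p" "p \<le> N" and ns: "\<not> start p"
  shows "1 \<le> source p \<and> source p < p \<and> succ (elem_at (source p)) = Some (elem_at p)"
proof -
  have pq: "pending A n k (rebuild A n k (p - 1)) \<noteq> []" using pending_nonempty[OF p ns] .
  let ?u = "hd (pending A n k (rebuild A n k (p - 1)))"
  have u: "?u \<in> set (rebuild A n k (p - 1))" "succ ?u \<noteq> None" using hd_pending[OF pq] by auto
  have uE: "?u \<in> E" "position ?u \<le> p - 1" using set_rebuild[of "p - 1" ?u] u p by auto
  have "elem_at p = the (succ ?u)" using elem_at_Suc[of "p - 1"] p ns unfolding next_elem_def by simp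
  then have "succ ?u = Some (elem_at p)" using u(2) by auto
  then show ?thesis unfolding source_def using uE elem_at_position[OF uE(1)] p by auto
qed

lemma source_mono: assumes rq: "1 \<le> r" "r < q" "q \<le> N" and nr: "\<not> start r" and nq: "\<not> start q"
  shows "source r < source q"
proof -
  let ?wr = "rebuild A n k (r - 1)" and ?wq = "rebuild A n k (q - 1)"
  let ?Pr = "\<lambda>v. succ v \<noteq> None \<and> the (succ v) \<notin> set ?wr"
  let ?Pq = "\<lambda>v. succ v \<noteq> None \<and> the (succ v) \<notin> set ?wq"
  have pr: "pending A n k ?wr \<noteq> []" using pending_nonempty[OF rq(1) _ nr] rq by simp
  have pq: "pending A n k ?wq \<noteq> []" using pending_nonempty[OF _ rq(3) nq] rq by simp
  obtain ir where ir: "ir < length ?wr" "hd (pending A n k ?wr) = ?wr ! ir" "?Pr (?wr ! ir)" "\<forall>j<ir. \<not> ?Pr (?wr ! j)"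
    using hd_filter_nth_ex[of ?Pr ?wr] pr unfolding pending_def by blast
  obtain iq where iq: "iq < length ?wq" "hd (pending A n k ?wq) = ?wq ! iq" "?Pq (?wq ! iq)" "\<forall>j<iq. \<not> ?Pq (?wq ! j)"
    using hd_filter_nth_ex[of ?Pq ?wq] pq unfolding pending_def by blast
  have lr: "length ?wr = r - 1" "length ?wq = q - 1" by (simp_all add: length_rebuild)
  have tw: "\<And>t. t \<le> N \<Longrightarrow> rebuild A n k t = take t word" unfolding word_def using take_rebuild by simp
  have nthw: "\<And>t i. t \<le> N \<Longrightarrow> i < t \<Longrightarrow> rebuild A n k t ! i = elem_at (Suc i)"
    unfolding elem_at_def using tw by simp
  have sr: "source r = Suc ir"
  proof -
    have "hd (pending A n k ?wr) = elem_at (Suc ir)" using ir(1,2) nthw[of "r - 1" ir] lr rq by simp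
    then show ?thesis unfolding source_def using position_elem_at[of "Suc ir"] ir(1) lr rq by simp
  qed
  have sq: "source q = Suc iq"
  proof -
    have "hd (pending A n k ?wq) = elem_at (Suc iq)" using iq(1,2) nthw[of "q - 1" iq] lr rq by simp
    then show ?thesis unfolding source_def using position_elem_at[of "Suc iq"] iq(1) lr rq by simp
  qed
  have subs: "set ?wr \<subseteq> set ?wq"
    using take_rebuild[of "r - 1" "q - 1" A n k] rq by (metis diff_le_mono less_imp_le set_take_subset)
  have "ir < iq"
  proof (rule ccontr)
    assume "\<not> ir < iq"
    then have le: "iq \<le> ir" by simp
    have v: "?wq ! iq = ?wr ! iq" using nthw[of "q - 1" iq] nthw[of "r - 1" iq] le ir(1) lr rq by simp
    show False
    proof (cases "iq < ir")
      case True
      then have "\<not> ?Pr (?wr ! iq)" using ir(4) by simp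
      then have "\<not> ?Pq (?wq ! iq)" using v subs by auto
      then show False using iq(3) by simp
    next
      case False
      then have eq: "iq = ir" using le by simp
      have "elem_at r = the (succ (hd (pending A n k ?wr)))" using elem_at_Suc[of "r - 1"] rq nr unfolding next_elem_def by simp
      moreover have "elem_at r \<in> set ?wq" using set_rebuild[of "q - 1" "elem_at r"] elem_at_elems[of r] position_elem_at[of r] rq by simp
      ultimately have "\<not> ?Pq (?wr ! ir)" using ir(2) by simp
      then show False using iq(3) v eq by simp
    qed
  qed
  then show ?thesis using sr sq by simp
qed

lemma source_position: assumes e: "e \<in> E" and s: "succ e = Some w"
  shows "\<not> start (position w) \<and> source (position w) = position e"
proof -
  have wE: "w \<in> E" using succ_elems[OF e s] .
  have t: "1 \<le> position w" "position w \<le> N" "elem_at (position w) = w" using elem_at_position[OF wE] by auto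
  have ns: "\<not> start (position w)"
  proof
    assume "start (position w)"
    then have "w = (first_of (position w), k - 1)" using elem_at_start t by simp
    then show False using succ_not_first[OF e s \<open>start (position w)\<close>] by simp
  qed
  have "succ (elem_at (source (position w))) = Some w" using source_props[OF t(1,2) ns] t by simp
  moreover have "elem_at (source (position w)) \<in> E" using source_props[OF t(1,2) ns] t elem_at_elems by simp
  ultimately have "elem_at (source (position w)) = e" using succ_inj e s by blast
  then have "source (position w) = position e" using position_elem_at source_props[OF t(1,2) ns] t by (metis le_trans less_imp_le)
  then show ?thesis using ns by simp
qed

lemma position_start: assumes j: "1 \<le> j" "j \<le> n" shows "position (first_of (A j), k - 1) = A j"
proof -
  have "elem_at (A j) = (first_of (A j), k - 1)" using elem_at_start[of "A j"] A_ge_1 A_le_N start_A j by simp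
  then show ?thesis using position_elem_at[of "A j"] A_ge_1 A_le_N j by metis
qed

lemma succ_position_less: "(e, w) \<in> succ_rel \<Longrightarrow> position e < position w"
proof -
  assume "(e, w) \<in> succ_rel"
  then have ew: "e \<in> E" "succ e = Some w" unfolding succ_rel_def by auto
  have wE: "w \<in> E" using succ_elems[OF ew] .
  have "source (position w) = position e" "\<not> start (position w)" using source_position[OF ew] by auto
  then show ?thesis using source_props[of "position w"] elem_at_position[OF wE] by simp
qed

lemma succ_rtrancl_position_le: "(e, w) \<in> succ_rel\<^sup>* \<Longrightarrow> position e \<le> position w"
proof (induction rule: rtrancl_induct)
  case base then show ?case by simp
next
  case (step y z) then show ?case using succ_position_less[of y z] by simp
qed

lemma A_le_position: assumes j: "1 \<le> j" "j \<le> n" and m: "m < k" shows "A j \<le> position (j, m)"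
  using succ_rtrancl_position_le[OF start_reaches[OF j m]] position_start[OF j] by simp

end

section \<open>A point realising the reading\<close>

context parking_witness
begin

lemma start_1: "start 1"
proof -
  have "sort a ! 0 \<le> 1" using park n1 unfolding k_parking_def by fastforce
  moreover have "sort a ! 0 \<in> set a" using length_a n1 by (metis length_sort nth_mem set_sort gr0I not_one_le_zero)
  moreover have "\<forall>v\<in>set a. 1 \<le> v" using park unfolding k_parking_def by simp
  ultimately have "1 \<in> set a" by (metis le_antisym)
  then obtain t where t: "t < n" "a ! t = 1" using length_a by (metis in_set_conv_nth)
  then have "A (Suc t) = 1" unfolding entry_def by simp
  then show ?thesis unfolding is_start_def using t by (intro exI[of _ "Suc t"]) simp
qed

definition eps :: real where
  "eps = 1 / (real N + 1)"

lemma N_plus_1_pos: "0 < real N + 1"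
  by (simp add: add_nonneg_pos)

lemma eps_pos: "0 < eps"
  unfolding eps_def using N_plus_1_pos by simp

lemma eps_le_1: "eps \<le> 1"
  unfolding eps_def using N_plus_1_pos by (simp only: divide_le_eq_1_pos)

lemma N_eps_less_1: "real N * eps < 1"
  unfolding eps_def using N_plus_1_pos by (simp only: times_divide_eq_right mult_1_right divide_less_eq_1_pos)

lemma eps_pow_small:
  assumes "c \<le> N"
  shows "real c * eps ^ Suc L < eps ^ L"
proof -
  have "real c \<le> real N" using assms by (simp only: of_nat_le_iff)
  then have "real c * eps \<le> real N * eps" using eps_pos by (intro mult_right_mono) auto
  then have "real c * eps < 1" using N_eps_less_1 by linarith
  then have "(real c * eps) * eps ^ L < 1 * eps ^ L" using eps_pos by (intro mult_strict_right_mono) auto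
  then show ?thesis by (simp add: algebra_simps)
qed

text \<open>The point realising the reading gives position \<open>p\<close> the value \<open>-tau p\<close>. Each arc
  \<open>source p \<rightarrow> p\<close> adds one to the level, so \<open>tau\<close> grows by exactly \<open>1\<close> along copy arcs and by
  slightly more along arcs leaving a copy \<open>x_i\<close>, which must span more than \<open>k\<close>. The perturbation
  \<open>phi\<close> grows by \<open>eps ^ Suc (level p)\<close> at these steps and at chain starts; since \<open>N * eps < 1\<close>,
  a step on one level outweighs all later steps on higher levels.\<close>
function level :: "nat \<Rightarrow> nat" where
  "level p = (if start p then (if p \<le> 1 then 0 else level (p - 1))
    else if 1 \<le> source p \<and> source p < p then Suc (level (source p)) else 0)"
  by pat_completeness auto
termination by (relation "Wellfounded.measure (\<lambda>p. p)") auto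

function phi :: "nat \<Rightarrow> real" where
  "phi p = (if start p then (if p \<le> 1 then eps else phi (p - 1) + eps ^ Suc (level p))
    else if 1 \<le> source p \<and> source p < p
    then phi (source p) + (if snd (elem_at (source p)) = 0 then eps ^ Suc (level p) else 0)
    else 0)"
  by pat_completeness auto
termination by (relation "Wellfounded.measure (\<lambda>p. p)") auto

declare level.simps[simp del] phi.simps[simp del]

definition tau :: "nat \<Rightarrow> real" where
  "tau p = real (level p) + phi p"

lemma level_start: "start p \<Longrightarrow> 2 \<le> p \<Longrightarrow> level p = level (p - 1)"
  by (subst level.simps) simp

lemma phi_start: "start p \<Longrightarrow> 2 \<le> p \<Longrightarrow> phi p = phi (p - 1) + eps ^ Suc (level p)"
  by (subst phi.simps) simp

lemma level_1: "level 1 = 0"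
  using start_1 by (subst level.simps) simp

lemma phi_1: "phi 1 = eps"
  using start_1 by (subst phi.simps) simp

lemma level_nonstart: "1 \<le> p \<Longrightarrow> p \<le> N \<Longrightarrow> \<not> start p \<Longrightarrow> level p = Suc (level (source p))"
  using source_props[of p] by (subst level.simps) simp

lemma phi_nonstart:
  "1 \<le> p \<Longrightarrow> p \<le> N \<Longrightarrow> \<not> start p \<Longrightarrow>
    phi p = phi (source p) + (if snd (elem_at (source p)) = 0 then eps ^ Suc (level p) else 0)"
  using source_props[of p] by (subst phi.simps) simp

lemma phi_bounds: "1 \<le> p \<Longrightarrow> p \<le> N \<Longrightarrow> 0 < phi p \<and> phi p \<le> real p * eps"
proof (induction p rule: less_induct)
  case (less p)
  have pw: "0 < eps ^ Suc (level p)" "eps ^ Suc (level p) \<le> eps"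
    using eps_pos eps_le_1 by (simp_all add: power_le_one mult_left_le)
  show ?case
  proof (cases "start p")
    case True
    show ?thesis
    proof (cases "p \<le> 1")
      case True then show ?thesis using phi_1 less.prems eps_pos by simp
    next
      case False
      then have "0 < phi (p - 1) \<and> phi (p - 1) \<le> real (p - 1) * eps" using less.IH[of "p - 1"] less.prems by simp
      moreover have "phi p = phi (p - 1) + eps ^ Suc (level p)" using phi_start True False by simp
      moreover have "real (p - 1) * eps + eps = real p * eps" using False by (simp add: of_nat_diff algebra_simps)
      ultimately show ?thesis using pw by linarith
    qed
  next
    case False
    have s: "1 \<le> source p" "source p < p" using source_props less.prems False by auto
    then have "0 < phi (source p) \<and> phi (source p) \<le> real (source p) * eps"
      using less.IH[of "source p"] less.prems by simp
    moreover have "real (source p) * eps + eps \<le> real p * eps"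
      using s eps_pos mult_right_mono[of "real (source p) + 1" "real p" eps] by (simp add: algebra_simps)
    ultimately show ?thesis using phi_nonstart[of p] less.prems False pw by auto
  qed
qed

lemma phi_less_1:
  assumes "1 \<le> p" "p \<le> N"
  shows "phi p < 1"
proof -
  have "real p \<le> real N" using assms(2) by (simp only: of_nat_le_iff)
  then have "real p * eps \<le> real N * eps" using eps_pos by (intro mult_right_mono) auto
  then show ?thesis using phi_bounds[OF assms] N_eps_less_1 by linarith
qed

definition nonstarts_upto :: "nat \<Rightarrow> nat set" where
  "nonstarts_upto r = {r'. 1 \<le> r' \<and> r' \<le> r \<and> \<not> start r'}"

lemma finite_nonstarts_upto: "finite (nonstarts_upto r)"
  unfolding nonstarts_upto_def by simp

lemma Max_nonstarts_upto:
  assumes "nonstarts_upto r \<noteq> {}"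
  shows "1 \<le> Max (nonstarts_upto r) \<and> Max (nonstarts_upto r) \<le> r \<and> \<not> start (Max (nonstarts_upto r))"
  using Max_in[OF finite_nonstarts_upto assms] unfolding nonstarts_upto_def by simp

lemma starts_run:
  assumes "1 \<le> M" "M \<le> r" "r \<le> N" and starts: "\<And>q. M < q \<Longrightarrow> q \<le> r \<Longrightarrow> start q"
  shows "level r = level M \<and> phi r = phi M + real (r - M) * eps ^ Suc (level M)"
  using assms(2-3) starts
proof (induction r rule: dec_induct)
  case base then show ?case by simp
next
  case (step r)
  have "start (Suc r)" "2 \<le> Suc r" using step assms(1) by auto
  then have "level (Suc r) = level r" "phi (Suc r) = phi r + eps ^ Suc (level (Suc r))"
    using level_start phi_start by auto
  moreover have "level r = level M \<and> phi r = phi M + real (r - M) * eps ^ Suc (level M)"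
    using step by simp
  ultimately show ?case using step.hyps by (simp add: Suc_diff_le algebra_simps)
qed

lemma level_phi_no_nonstart:
  assumes "1 \<le> r" "r \<le> N" "nonstarts_upto r = {}"
  shows "level r = 0 \<and> phi r = real r * eps"
proof -
  have "start q" if "1 < q" "q \<le> r" for q
    using assms(3) that unfolding nonstarts_upto_def by auto
  then show ?thesis
    using starts_run[of 1 r] assms level_1 phi_1 by (simp add: of_nat_diff algebra_simps)
qed

lemma level_phi_last_nonstart:
  assumes "r \<le> N" "nonstarts_upto r \<noteq> {}"
  shows "level r = level (Max (nonstarts_upto r)) \<and>
    phi r = phi (Max (nonstarts_upto r)) + real (r - Max (nonstarts_upto r)) * eps ^ Suc (level r)"
proof -
  let ?M = "Max (nonstarts_upto r)"
  have "start q" if "?M < q" "q \<le> r" for q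
  proof (rule ccontr)
    assume "\<not> start q"
    then have "q \<in> nonstarts_upto r" using that Max_nonstarts_upto[OF assms(2)] unfolding nonstarts_upto_def by simp
    then show False using that(1) Max_ge[OF finite_nonstarts_upto] by fastforce
  qed
  then show ?thesis using starts_run[of ?M r] Max_nonstarts_upto[OF assms(2)] assms(1) by simp
qed

lemma level_mono_step:
  assumes q: "2 \<le> q" "q \<le> N" and IH: "\<And>p q'. 1 \<le> p \<Longrightarrow> p \<le> q' \<Longrightarrow> q' < q \<Longrightarrow> level p \<le> level q'"
  shows "level (q - 1) \<le> level q"
proof (cases "start q")
  case True then show ?thesis using level_start q by simp
next
  case False
  show ?thesis
  proof (cases "nonstarts_upto (q - 1) = {}")
    case True then show ?thesis using level_phi_no_nonstart[of "q - 1"] q by simp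
  next
    case ne: False
    let ?M = "Max (nonstarts_upto (q - 1))"
    have M: "1 \<le> ?M" "?M \<le> q - 1" "\<not> start ?M" using Max_nonstarts_upto[OF ne] by auto
    have "source ?M < source q" using source_mono[of ?M q] M q False by simp
    then have "level (source ?M) \<le> level (source q)"
      using IH[of "source ?M" "source q"] source_props M q False by simp
    then show ?thesis
      using level_phi_last_nonstart[OF _ ne] level_nonstart M q False by simp
  qed
qed

lemma level_mono: "1 \<le> p \<Longrightarrow> p \<le> q \<Longrightarrow> q \<le> N \<Longrightarrow> level p \<le> level q"
proof (induction q arbitrary: p rule: less_induct)
  case (less q)
  show ?case
  proof (cases "p = q")
    case True then show ?thesis by simp
  next
    case False
    then have "p \<le> q - 1" "2 \<le> q" using less.prems by auto
    then have "level p \<le> level (q - 1)" using less.IH[of "q - 1" p] less.prems by simp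
    moreover have "level (q - 1) \<le> level q"
      using level_mono_step[of q] less.prems \<open>2 \<le> q\<close> less.IH by simp
    ultimately show ?thesis by simp
  qed
qed

text \<open>The step into a non-start position \<open>q\<close> on the level of \<open>q - 1\<close>: by the queue discipline the
  last non-start \<open>M < q\<close> has an earlier source than \<open>q\<close>, and the gap between the two sources
  outweighs everything \<open>phi\<close> gained between \<open>M\<close> and \<open>q - 1\<close>.\<close>
lemma phi_step_gap:
  assumes q: "2 \<le> q" "q \<le> N" "level (q - 1) = level q"
    and IH: "\<And>p q'. 1 \<le> p \<Longrightarrow> p < q' \<Longrightarrow> q' < q \<Longrightarrow> level p = level q' \<Longrightarrow>
      phi q' - phi p \<ge> eps ^ Suc (level q')"
  shows "phi q - phi (q - 1) \<ge> eps ^ Suc (level q)"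
proof (cases "start q")
  case True then show ?thesis using phi_start q by simp
next
  case False
  let ?L = "level q" and ?s = "source q" and ?r = "q - 1"
  have sq: "1 \<le> ?s" "?s < q" using source_props q False by auto
  have lq: "?L = Suc (level ?s)" using level_nonstart q False by simp
  have "1 \<le> ?r" "?r \<le> N" using q by auto
  then have ne: "nonstarts_upto ?r \<noteq> {}" using level_phi_no_nonstart[of ?r] q(3) lq by auto
  let ?M = "Max (nonstarts_upto ?r)"
  have M: "1 \<le> ?M" "?M \<le> ?r" "\<not> start ?M" using Max_nonstarts_upto[OF ne] by auto
  have last: "level ?r = level ?M" "phi ?r = phi ?M + real (?r - ?M) * eps ^ Suc ?L"
    using level_phi_last_nonstart[OF _ ne] q by auto
  have sM: "1 \<le> source ?M" "source ?M < ?M" using source_props M q by auto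
  have lM: "level ?M = Suc (level (source ?M))" using level_nonstart M q by simp
  have "source ?M < ?s" using source_mono[of ?M q] M q False by simp
  then have g1: "phi ?s - phi (source ?M) \<ge> eps ^ Suc (level ?s)"
    using IH[of "source ?M" ?s] sq sM lM last lq q by simp
  have "level ?M = ?L" using last(1) q(3) by simp
  then have "phi ?M = phi (source ?M) + (if snd (elem_at (source ?M)) = 0 then eps ^ Suc ?L else 0)"
    using phi_nonstart[of ?M] M q by simp
  then have pM: "phi ?M \<le> phi (source ?M) + eps ^ Suc ?L"
    using eps_pos by (cases "snd (elem_at (source ?M)) = 0") auto
  have pq: "phi q \<ge> phi ?s" using phi_nonstart[of q] q False eps_pos by simp
  have "?r - ?M + 1 + 1 \<le> N" using M q by simp
  then have "real (?r - ?M + 1 + 1) * eps ^ Suc ?L < eps ^ ?L" by (rule eps_pow_small)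
  then show ?thesis using g1 pM pq last lq by (simp add: algebra_simps)
qed

lemma phi_gap: "1 \<le> p \<Longrightarrow> p < q \<Longrightarrow> q \<le> N \<Longrightarrow> level p = level q \<Longrightarrow> phi q - phi p \<ge> eps ^ Suc (level q)"
proof (induction q arbitrary: p rule: less_induct)
  case (less q)
  have "level p \<le> level (q - 1)" "level (q - 1) \<le> level q"
    using level_mono[of p "q - 1"] level_mono[of "q - 1" q] less.prems by auto
  then have lq: "level (q - 1) = level q" using less.prems(4) by simp
  have step: "phi q - phi (q - 1) \<ge> eps ^ Suc (level q)"
    using phi_step_gap[of q] less.prems lq less.IH by simp
  show ?case
  proof (cases "p = q - 1")
    case True then show ?thesis using step by simp
  next
    case False
    then have "phi (q - 1) - phi p \<ge> eps ^ Suc (level (q - 1))"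
      using less.IH[of "q - 1" p] less.prems lq by simp
    moreover have "0 < eps ^ Suc (level q)" using eps_pos by simp
    ultimately show ?thesis using step lq by simp
  qed
qed

lemma tau_mono:
  assumes "1 \<le> p" "p < q" "q \<le> N"
  shows "tau p < tau q"
proof (cases "level p = level q")
  case True
  then have "phi q - phi p \<ge> eps ^ Suc (level q)" using phi_gap assms by simp
  moreover have "0 < eps ^ Suc (level q)" using eps_pos by simp
  ultimately show ?thesis unfolding tau_def using True by simp
next
  case False
  then have "real (level p) + 1 \<le> real (level q)" using level_mono[of p q] assms by simp
  moreover have "phi p < 1" "0 < phi q" using phi_less_1 phi_bounds assms by auto
  ultimately show ?thesis unfolding tau_def by simp
qed

lemma tau_source:
  assumes "1 \<le> t" "t \<le> N" "\<not> start t"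
  shows "tau t - tau (source t) = 1 + (if snd (elem_at (source t)) = 0 then eps ^ Suc (level t) else 0)"
  unfolding tau_def using level_nonstart[OF assms] phi_nonstart[OF assms] by simp

lemma tau_diff_less_1:
  assumes pq: "1 \<le> p" "p < q" "q \<le> N"
    and noarc: "\<And>t. 1 \<le> t \<Longrightarrow> t \<le> N \<Longrightarrow> \<not> start t \<Longrightarrow> p \<le> source t \<Longrightarrow> t \<le> q \<Longrightarrow> False"
  shows "tau q - tau p < 1"
proof (cases "level q = level p")
  case True
  have "phi q < 1" "0 < phi p" using phi_less_1 phi_bounds pq by auto
  then show ?thesis unfolding tau_def using True by simp
next
  case False
  then have gt: "level p < level q" using level_mono[of p q] pq by simp
  let ?L = "level q"
  have ne: "nonstarts_upto q \<noteq> {}" using level_phi_no_nonstart[of q] pq gt by auto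
  let ?M = "Max (nonstarts_upto q)"
  have M: "1 \<le> ?M" "?M \<le> q" "\<not> start ?M" using Max_nonstarts_upto[OF ne] by auto
  have last: "level ?M = ?L" "phi q = phi ?M + real (q - ?M) * eps ^ Suc ?L"
    using level_phi_last_nonstart[OF _ ne] pq by auto
  have sM: "1 \<le> source ?M" "source ?M < ?M" using source_props M pq by auto
  have "p < ?M" using level_mono[of ?M p] M pq gt last by (cases "p < ?M") auto
  then have sp: "source ?M < p" using noarc[of ?M] M pq by (cases "source ?M < p") auto
  have lM: "level ?M = Suc (level (source ?M))" using level_nonstart M pq by simp
  have "level (source ?M) \<le> level p" using level_mono[of "source ?M" p] sM sp pq by simp
  then have Lp: "?L = Suc (level p)" "level (source ?M) = level p" using lM last gt by auto
  have g: "phi p - phi (source ?M) \<ge> eps ^ Suc (level p)" using phi_gap[of "source ?M" p] sM sp pq Lp by simp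
  have "phi ?M = phi (source ?M) + (if snd (elem_at (source ?M)) = 0 then eps ^ Suc ?L else 0)"
    using phi_nonstart[of ?M] M pq last(1) by simp
  then have pM: "phi ?M \<le> phi (source ?M) + eps ^ Suc ?L"
    using eps_pos by (cases "snd (elem_at (source ?M)) = 0") auto
  have "real (q - ?M + 1) * eps ^ Suc ?L < eps ^ ?L" using M pq by (intro eps_pow_small) simp
  then have "phi q < phi p" using g pM last Lp by (simp add: algebra_simps)
  then show ?thesis unfolding tau_def using Lp by simp
qed

end

context parking_witness
begin

definition witness :: "nat \<Rightarrow> real" where
  "witness i = (if 1 \<le> i \<and> i \<le> n then - tau (position (i, 0)) else 0)"

lemma position_range: "e \<in> E \<Longrightarrow> 1 \<le> position e \<and> position e \<le> N"
  using elem_at_position by auto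

lemma dg_val_witness: "(i, m) \<in> E \<Longrightarrow> dg_val witness (i, m) = - tau (position (i, m))"
proof (induction m)
  case 0
  then show ?case unfolding dg_val_def witness_def by (simp add: mem_dg_elems)
next
  case (Suc m)
  have E1: "(i, m) \<in> E" using Suc.prems by (simp add: mem_dg_elems)
  have "succ (i, Suc m) = Some (i, m)" unfolding chain_next_def by simp
  then have s: "\<not> start (position (i, m))" "source (position (i, m)) = position (i, Suc m)"
    using source_position[OF Suc.prems] by auto
  have "tau (position (i, m)) - tau (source (position (i, m))) = 1"
    using tau_source[of "position (i, m)"] position_range[OF E1] s elem_at_position[OF Suc.prems] by simp
  then show ?case using Suc.IH[OF E1] s(2) unfolding dg_val_def by simp
qed

lemma tau_less_iff: "1 \<le> p \<Longrightarrow> p \<le> N \<Longrightarrow> 1 \<le> q \<Longrightarrow> q \<le> N \<Longrightarrow> tau p < tau q \<longleftrightarrow> p < q"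
  using tau_mono[of p q] tau_mono[of q p] by (cases p q rule: linorder_cases) auto

lemma dg_val_witness_less_iff:
  assumes "e \<in> E" "e' \<in> E"
  shows "dg_val witness e < dg_val witness e' \<longleftrightarrow> position e' < position e"
proof -
  have "dg_val witness e = - tau (position e)" "dg_val witness e' = - tau (position e')"
    using dg_val_witness assms by (metis surj_pair)+
  then show ?thesis using tau_less_iff[of "position e'" "position e"] position_range assms by auto
qed

lemma dg_val_witness_inj: "e \<in> E \<Longrightarrow> e' \<in> E \<Longrightarrow> dg_val witness e = dg_val witness e' \<Longrightarrow> e = e'"
  using dg_val_witness_less_iff[of e e'] dg_val_witness_less_iff[of e' e] position_inj
  by (metis less_irrefl linorder_neqE_nat)

lemma pos_witness:
  assumes e: "e \<in> E"
  shows "dg_pos n k witness e = position e"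
proof -
  have "{q \<in> E. dg_val witness q > dg_val witness e} = elem_at ` {1..<position e}"
  proof (intro set_eqI iffI)
    fix q assume "q \<in> {q \<in> E. dg_val witness q > dg_val witness e}"
    then have q: "q \<in> E" "dg_val witness e < dg_val witness q" by auto
    then have "position q < position e" using dg_val_witness_less_iff[OF e q(1)] by simp
    then show "q \<in> elem_at ` {1..<position e}"
      using elem_at_position[OF q(1)] by (intro image_eqI[of _ _ "position q"]) auto
  next
    fix q assume "q \<in> elem_at ` {1..<position e}"
    then obtain p where p: "1 \<le> p" "p < position e" "q = elem_at p" by auto
    then have "p \<le> N" using position_range[OF e] by simp
    then have "q \<in> E" "position q = p" using elem_at_elems position_elem_at p by auto
    then show "q \<in> {q \<in> E. dg_val witness q > dg_val witness e}"
      using dg_val_witness_less_iff[OF e] p by simp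
  qed
  moreover have "inj_on elem_at {1..<position e}"
    using bij_betw_elem_at position_range[OF e] unfolding bij_betw_def
    by (auto intro: inj_on_subset)
  ultimately have "card {q \<in> E. dg_val witness q > dg_val witness e} = position e - 1"
    by (simp add: card_image)
  then show ?thesis unfolding dg_pos_def using position_range[OF e] by simp
qed

lemma tau_gt_1_if_arc_within:
  assumes uv: "(u, v) \<in> succ_rel" and p: "1 \<le> p" "p \<le> position u" and q: "position v \<le> q" "q \<le> N"
    and long: "snd u = 0 \<or> p < position u \<or> position v < q"
  shows "tau q - tau p > 1"
proof -
  have u: "u \<in> E" "succ u = Some v" using uv succ_rel_iff by auto
  have r: "1 \<le> position u" "position u \<le> N" "1 \<le> position v" "position v \<le> N"
    using position_range u succ_elems by blast+
  have "tau (position v) - tau (position u) = 1 + (if snd u = 0 then eps ^ Suc (level (position v)) else 0)"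
    using tau_source[of "position v"] r source_position[OF u] elem_at_position u by simp
  moreover have "tau p \<le> tau (position u)" "tau (position v) \<le> tau q"
    using tau_less_iff[of "position u" p] tau_less_iff[of q "position v"] p q r by linarith+
  moreover have "snd u \<noteq> 0 \<Longrightarrow> tau p < tau (position u) \<or> tau (position v) < tau q"
    using long tau_less_iff p q r by auto
  moreover have "0 < eps ^ Suc (level (position v))" using eps_pos by simp
  ultimately show ?thesis by (cases "snd u = 0") auto
qed

lemma tau_lt_1_if_no_arc_within:
  assumes pq: "1 \<le> p" "p < q" "q \<le> N"
    and noarc: "\<not> (\<exists>u v. (u, v) \<in> succ_rel \<and> p \<le> position u \<and> position v \<le> q)"
  shows "tau q - tau p < 1"
proof (rule tau_diff_less_1[OF pq])
  fix t assume t: "1 \<le> t" "t \<le> N" "\<not> start t" "p \<le> source t" "t \<le> q"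
  then have s: "1 \<le> source t" "source t < t" "succ (elem_at (source t)) = Some (elem_at t)"
    using source_props by auto
  then have "(elem_at (source t), elem_at t) \<in> succ_rel" using elem_at_elems t unfolding succ_rel_def by simp
  moreover have "position (elem_at (source t)) = source t" "position (elem_at t) = t"
    using position_elem_at s t by auto
  ultimately show False using noarc t by metis
qed

lemma witness_long_diff:
  assumes ij: "1 \<le> i" "i < j" "j \<le> n"
  shows "(witness i - witness j > real k \<longleftrightarrow>
      (\<exists>u v. (u, v) \<in> succ_rel \<and> position (i, 0) \<le> position u \<and> position v \<le> position (j, k - 1)))
    \<and> witness i - witness j \<noteq> real k"
proof -
  have E2: "(i, 0) \<in> E" "(j, k - 1) \<in> E" using ij k1 mem_dg_elems by auto
  let ?p = "position (i, 0)" and ?q = "position (j, k - 1)"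
  let ?arc = "\<exists>u v. (u, v) \<in> succ_rel \<and> ?p \<le> position u \<and> position v \<le> ?q"
  have rp: "1 \<le> ?p" "?p \<le> N" "1 \<le> ?q" "?q \<le> N" using position_range E2 by auto
  have "dg_val witness (j, k - 1) = - tau ?q" using dg_val_witness E2 by simp
  then have d: "witness i - witness j - real k = tau ?q - tau ?p - 1"
    using ij k1 unfolding witness_def dg_val_def by (simp add: of_nat_diff)
  consider "\<not> ?p < ?q" | "?p < ?q" ?arc | "?p < ?q" "\<not> ?arc" by blast
  then show ?thesis
  proof cases
    case 1
    then have "tau ?q \<le> tau ?p" using tau_less_iff[of ?p ?q] rp by linarith
    moreover have "\<not> ?arc" using 1 succ_position_less by fastforce
    ultimately show ?thesis using d by auto
  next
    case 2
    then obtain u v where uv: "(u, v) \<in> succ_rel" "?p \<le> position u" "position v \<le> ?q" by blast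
    have "u = (i, 0) \<or> ?p < position u \<or> position v < ?q"
      using uv position_inj[of u "(i, 0)"] E2 succ_rel_iff by (metis le_neq_implies_less)
    then have "tau ?q - tau ?p > 1" using tau_gt_1_if_arc_within[OF uv(1) rp(1) uv(2,3) rp(4)] by auto
    then show ?thesis using d 2 by simp
  next
    case 3
    then show ?thesis using tau_lt_1_if_no_arc_within[OF rp(1) _ rp(4)] d by simp
  qed
qed

lemma witness_complement: "witness \<in> shi_complement n k"
  unfolding shi_complement_iff
proof (intro conjI allI impI)
  show "witness \<in> ambient n" unfolding ambient_def witness_def by auto
  fix i j l assume h: "1 \<le> i \<and> i < j \<and> j \<le> n \<and> - int k + 1 \<le> l \<and> l \<le> int k"
  show "witness i - witness j \<noteq> of_int l"
  proof (cases "l = int k")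
    case True then show ?thesis using witness_long_diff[of i j] h by simp
  next
    case False
    have "witness i - witness j = of_int l \<Longrightarrow>
      (if 0 \<le> l then dg_val witness (i, 0) = dg_val witness (j, nat l)
       else dg_val witness (i, nat (- l)) = dg_val witness (j, 0))"
      unfolding dg_val_def by (cases "0 \<le> l") (simp_all add: algebra_simps)
    moreover have "(i, 0) \<in> E" "(j, 0) \<in> E" "0 \<le> l \<Longrightarrow> (j, nat l) \<in> E" "\<not> 0 \<le> l \<Longrightarrow> (i, nat (- l)) \<in> E"
      using h False k1 by (auto simp: mem_dg_elems)
    ultimately show ?thesis using dg_val_witness_inj h by (cases "0 \<le> l") fastforce+
  qed
qed

lemma shi_point_witness: "shi_point n k witness"
  using k1 witness_complement by (simp add: shi_point_def)

lemma succ_rel_arcs: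
  assumes "(e, w) \<in> succ_rel"
  shows "(e, w) \<in> dg_arcs n k witness"
proof -
  have e: "e \<in> E" "succ e = Some w" using assms succ_rel_iff by auto
  obtain i m where im: "e = (i, m)" by fastforce
  have h: "1 \<le> i" "i \<le> n" "m < k" using e im mem_dg_elems by auto
  have "succ (i, m) = Some w" using e(2) im by simp
  from succ_cases[OF this] show ?thesis
  proof (elim disjE conjE exE)
    assume "0 < m" "w = (i, m - 1)"
    then show ?thesis unfolding dg_arcs_def using h im by auto
  next
    fix j assume j: "m = 0" "w = (j, k - 1)" "i < j" "j \<le> n"
    then have "witness i - witness j > real k" using witness_long_diff[of i j] h assms im by auto
    then show ?thesis unfolding dg_arcs_def using h j im by auto
  qed
qed

lemma succ_rel_within_arc:
  assumes "(p, q) \<in> dg_arcs n k witness"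
  shows "\<exists>u v. (u, v) \<in> succ_rel \<and> position p \<le> position u \<and> position v \<le> position q"
  using assms unfolding dg_arcs_def
proof (elim UnE CollectE exE conjE)
  fix i m assume "((p, q)) = ((i, m), (i, m - 1))" "1 \<le> i" "i \<le> n" "0 < m" "m \<le> k - 1"
  then have "(p, q) \<in> succ_rel" unfolding succ_rel_def using k1 by (auto simp: mem_dg_elems chain_next_def)
  then show ?thesis by blast
next
  fix i j assume "((p, q)) = ((i, 0), (j, k - 1))" "1 \<le> i" "i < j" "j \<le> n" "witness i - witness j > real k"
  then show ?thesis using witness_long_diff[of i j] by auto
qed

lemma succ_rel_no_nesting:
  assumes a: "(e, w) \<in> succ_rel" "(e', w') \<in> succ_rel" "position e \<le> position e'" "position w' \<le> position w"
  shows "(e', w') = (e, w)"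
proof -
  have e: "e \<in> E" "succ e = Some w" "e' \<in> E" "succ e' = Some w'" using a succ_rel_iff by auto
  have wE: "w \<in> E" "w' \<in> E" using succ_elems e by blast+
  have s: "\<not> start (position w)" "source (position w) = position e"
    "\<not> start (position w')" "source (position w') = position e'"
    using source_position e by blast+
  have "\<not> position w' < position w"
    using source_mono[of "position w'" "position w"] position_range wE s a(3) by fastforce
  then have "w' = w" using a(4) position_inj wE by simp
  then show ?thesis using succ_inj e by blast
qed

lemma witness_kept_arcs: "dg_kept_arcs n k witness = succ_rel"
proof -
  interpret W: shi_point n k witness by (rule shi_point_witness)
  have "(p, q) \<in> W.K \<longleftrightarrow> (p, q) \<in> succ_rel" for p q
  proof
    assume kept: "(p, q) \<in> W.K"
    then obtain u v where uv: "(u, v) \<in> succ_rel" "position p \<le> position u" "position v \<le> position q"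
      using succ_rel_within_arc W.kept_arc by blast
    moreover have "p \<in> E" "q \<in> E" "u \<in> E" "v \<in> E"
      using W.arc_elems W.kept_arc[OF kept] W.arc_elems[OF succ_rel_arcs[OF uv(1)]] by auto
    ultimately show "(p, q) \<in> succ_rel"
      using kept succ_rel_arcs[OF uv(1)] pos_witness unfolding W.kept_iff by (metis prod.inject)
  next
    assume pq: "(p, q) \<in> succ_rel"
    have "(p', q') = (p, q)" if arc: "(p', q') \<in> W.Arc" "W.pos p \<le> W.pos p'" "W.pos q' \<le> W.pos q" for p' q'
    proof -
      obtain u v where uv: "(u, v) \<in> succ_rel" "position p' \<le> position u" "position v \<le> position q'"
        using succ_rel_within_arc[OF arc(1)] by blast
      have E: "p \<in> E" "q \<in> E" "p' \<in> E" "q' \<in> E" using W.arc_elems arc(1) succ_rel_arcs[OF pq] by auto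
      then have "position p \<le> position p'" "position q' \<le> position q" using arc pos_witness by auto
      then have "(u, v) = (p, q)" using succ_rel_no_nesting[OF pq uv(1)] uv by simp
      then show ?thesis using uv \<open>position p \<le> position p'\<close> \<open>position q' \<le> position q\<close> E position_inj
        by (metis le_antisym prod.inject)
    qed
    then show "(p, q) \<in> W.K" using succ_rel_arcs[OF pq] unfolding W.kept_iff by blast
  qed
  then show ?thesis by auto
qed

lemma succ_rel_sym_rtrancl_label:
  assumes "((i, 0), q) \<in> (succ_rel \<union> succ_rel\<inverse>)\<^sup>*" and i: "(i, 0) \<in> E"
  shows "q \<in> E \<and> A (fst q) = A i"
  using assms(1)
proof (induction rule: rtrancl_induct)
  case base then show ?case using i by simp
next
  case (step y z)
  from step.hyps(2) show ?case
  proof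
    assume "(y, z) \<in> succ_rel"
    then have "y \<in> E" "succ y = Some z" by (simp_all add: succ_rel_iff)
    then show ?case using step.IH succ_elems[of y z] succ_A[of y z] by simp
  next
    assume "(y, z) \<in> succ_rel\<inverse>"
    then have "z \<in> E" "succ z = Some y" by (simp_all add: succ_rel_iff)
    then show ?case using step.IH succ_A[of z y] by simp
  qed
qed

lemma witness_chain:
  assumes i: "1 \<le> i" "i \<le> n"
  shows "dg_chain n k witness (i, 0) = {(j, m). 1 \<le> j \<and> j \<le> n \<and> m < k \<and> A j = A i}"
proof (intro set_eqI iffI)
  fix q assume "q \<in> dg_chain n k witness (i, 0)"
  then have "((i, 0), q) \<in> (succ_rel \<union> succ_rel\<inverse>)\<^sup>*" unfolding dg_chain_def witness_kept_arcs by simp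
  then show "q \<in> {(j, m). 1 \<le> j \<and> j \<le> n \<and> m < k \<and> A j = A i}"
    using succ_rel_sym_rtrancl_label i k1 by (auto simp: mem_dg_elems)
next
  fix q assume "q \<in> {(j, m). 1 \<le> j \<and> j \<le> n \<and> m < k \<and> A j = A i}"
  then obtain j m where h: "q = (j, m)" "1 \<le> j" "j \<le> n" "m < k" "A j = A i" by blast
  let ?s = "(first_of (A i), k - 1)"
  have "(?s, (i, 0)) \<in> (succ_rel \<union> succ_rel\<inverse>)\<^sup>*" "(?s, (j, m)) \<in> (succ_rel \<union> succ_rel\<inverse>)\<^sup>*"
    using start_reaches[of i 0] start_reaches[of j m] i h k1 rtrancl_mono[of succ_rel] by auto
  then have "((i, 0), (j, m)) \<in> (succ_rel \<union> succ_rel\<inverse>)\<^sup>*"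
    by (metis converse_Un converse_converse rtrancl_converseI rtrancl_trans sup_commute)
  then show "q \<in> dg_chain n k witness (i, 0)" unfolding dg_chain_def witness_kept_arcs using h by simp
qed

lemma sigma_witness: "sigma_pt n k witness = a"
proof (rule nth_equalityI)
  show "length (sigma_pt n k witness) = length a" unfolding sigma_pt_def using length_a by simp
next
  fix t assume "t < length (sigma_pt n k witness)"
  moreover have "length (sigma_pt n k witness) = n" unfolding sigma_pt_def by simp
  ultimately have t: "1 \<le> Suc t" "Suc t \<le> n" by auto
  let ?C = "{(j, m). 1 \<le> j \<and> j \<le> n \<and> m < k \<and> A j = A (Suc t)}"
  have "dg_pos n k witness ` dg_chain n k witness (Suc t, 0) = position ` ?C"
    unfolding witness_chain[OF t] using pos_witness by (intro image_cong) (auto simp: mem_dg_elems)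
  moreover have "Min (position ` ?C) = A (Suc t)"
  proof (rule Min_eqI)
    show "finite (position ` ?C)" by (rule finite_imageI) (auto intro: finite_subset[OF _ finite_dg_elems] simp: mem_dg_elems)
    show "A (Suc t) \<le> y" if y: "y \<in> position ` ?C" for y
    proof -
      obtain j m where "y = position (j, m)" "1 \<le> j" "j \<le> n" "m < k" "A j = A (Suc t)"
        using y by auto
      then show ?thesis using A_le_position[of j m] by simp
    qed
    have "1 \<le> first_of (A (Suc t))" "first_of (A (Suc t)) \<le> n" "A (first_of (A (Suc t))) = A (Suc t)"
      using first_of_props[OF start_A[OF t]] by blast+
    moreover have "k - 1 < k" using k1 by simp
    ultimately have "(first_of (A (Suc t)), k - 1) \<in> ?C"
      unfolding mem_Collect_eq prod.case by (intro conjI)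
    then show "A (Suc t) \<in> position ` ?C"
      by (rule image_eqI[where f = position, OF position_start[OF t, symmetric]])
  qed
  moreover have "sigma_pt n k witness ! t = Min (dg_pos n k witness ` dg_chain n k witness ([1..<n+1] ! t, 0))"
    unfolding sigma_pt_def using t by (intro nth_map) simp
  moreover have "[1..<n+1] ! t = Suc t" using t by (subst nth_upt) auto
  ultimately show "sigma_pt n k witness ! t = a ! t" unfolding entry_def by simp
qed

end

lemma sigma_pt_surj:
  assumes "1 \<le> k" "1 \<le> n" "k_parking n k a"
  shows "\<exists>x\<in>shi_complement n k. sigma_pt n k x = a"
proof -
  interpret parking_witness n k a using assms by unfold_locales
  show ?thesis using witness_complement sigma_witness by blast
qed

theorem theorem3p5:
  fixes n k :: nat
  assumes "1 \<le> n" and "1 \<le> k"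
  shows "bij_betw (shi_sigma n k) (shi_regions n k) {a. k_parking n k a}"
proof -
  let ?C = "shi_complement n k"
  let ?cell = "\<lambda>x. {y \<in> ?C. shi_equiv n k x y}"
  have "inj_on (shi_sigma n k) (?cell ` ?C)"
  proof (rule inj_onI, clarify)
    fix x y assume x: "x \<in> ?C" and y: "y \<in> ?C" and eq: "shi_sigma n k (?cell x) = shi_sigma n k (?cell y)"
    then have "shi_equiv n k x y"
      using shi_equiv_if_sigma_eq[OF assms(2) x y] shi_sigma_cell[OF assms(2)] by simp
    then show "?cell x = ?cell y" using shi_equiv_sym shi_equiv_trans by blast
  qed
  moreover have "shi_sigma n k ` ?cell ` ?C = sigma_pt n k ` ?C"
    unfolding image_image using shi_sigma_cell[OF assms(2)] by (rule image_cong[OF refl])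
  moreover have "sigma_pt n k ` ?C = {a. k_parking n k a}"
    using shi_point.sigma_pt_k_parking[OF shi_point.intro[OF assms(2)]] sigma_pt_surj[OF assms(2,1)]
    by blast
  ultimately show ?thesis unfolding bij_betw_def shi_regions_eq by simp
qed

end
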